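(* Let $d=2$ and let $E\subset[1,2]$ with $\dim_{\mathrm{M}}E=\beta$, $\dim_{\mathrm{qA}}E=\gamma$, $\dim_{\mathrm{A}}E=\gamma_*$, and let $M_Ef(x)=\sup_{t\in E}\left|\int_{\mathbb{S}^{1}}f(x-ty)\,d\sigma(y)\right|$. If $M_E$ is of radial restricted weak type $(p,2p)$, then $p\ge\max\{\frac{\beta+3}{2},\gamma_*+1\}$. Additionally, suppose that $E$ is quasi-Assouad regular and $2\gamma\ge\beta+1$. Then $\mathcal{T}^{rad}_E\subset\mathcal{Q}(\beta,\gamma)$.
   Context: $\sigma$ is the normalized arc-length measure on $\mathbb{S}^1$. $N(F,a)$ is the minimal number of intervals of length $a$ needed to cover $F$. $\dim_{\mathrm{M}}E=\inf\{a>0:\exists c,\ N(E,\delta)\le c\delta^{-a}\ \forall\delta\in(0,1)\}$; $\dim_{\mathrm{A}}E=\inf\{a>0:\exists c \text{ s.t. for all intervals } I,\ \delta\in(0,|I|),\ N(E\cap I,\delta)\le c(\delta/|I|)^{-a}\}$; $\overline{\dim}_{\mathrm{A},\theta}E=\inf\{a>0:\exists c \text{ s.t. } \forall\delta\in(0,1),\ \forall I, |I|\ge\delta^\theta,\ N(E\cap I,\delta)\le c(\delta/|I|)^{-a}\}$ for $\theta\in[0,1]$; $\dim_{\mathrm{qA}}E=\lim_{\theta\nearrow1}\overline{\dim}_{\mathrm{A},\theta}E$. $E$ is quasi-Assouad regular if either $\gamma=0$ or $\overline{\dim}_{\mathrm{A},\theta}E=\gamma$ for every $\theta\in(1-\beta/\gamma,1)$.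 $M_E$ is of radial restricted weak type $(p,q)$ if it is bounded from $L^{p,1}_{rad}(\mathbb{R}^2)$ (radial functions in the Lorentz space $L^{p,1}$) to $L^{q,\infty}(\mathbb{R}^2)$. $\mathcal{T}^{rad}_E=\{(1/p,1/q)\in[0,1]^2: M_E$ bounded $L^p_{rad}(\mathbb{R}^2)\to L^q(\mathbb{R}^2)\}$. In $d=2$: $O=(0,0)$, $Q_1(b)=(\frac1{1+b},\frac1{1+b})$, $Q_2(b)=(\frac2{3+b},\frac1{3+b})$; for $1\le\beta+1\le2\gamma\le2$, $\theta=\frac{1-\beta}{2(\gamma-\beta)}$ if $\beta<1$, $\theta=1$ if $\beta=\gamma=1$, $Q_3(\beta,\gamma)=\big(\frac{2-\beta(1-\theta)}{2(1+\gamma\theta)},\frac{1}{2(1+\gamma\theta)}\big)$, and $\mathcal{Q}(\beta,\gamma)$ is the closed quadrilateral with vertices $O,Q_1(\beta),Q_3(\beta,\gamma),Q_2(2\gamma-1)$. *)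

theory Defs
  imports "HOL-Analysis.Analysis"
begin

definition cover_num :: "real set \<Rightarrow> real \<Rightarrow> nat" where
  "cover_num F a = Inf {card C | C. finite C \<and> F \<subseteq> (\<Union>c\<in>C. {c..c+a})}"

definition minkowski_dim :: "real set \<Rightarrow> real" where
  "minkowski_dim E = Inf {s. s > 0 \<and> (\<exists>c. \<forall>\<delta>. 0 < \<delta> \<and> \<delta> < 1 \<longrightarrow>
      real (cover_num E \<delta>) \<le> c * \<delta> powr (-s))}"

definition assouad_dim :: "real set \<Rightarrow> real" where
  "assouad_dim E = Inf {s. s > 0 \<and> (\<exists>c. \<forall>a b \<delta>. a < b \<and> 0 < \<delta> \<and> \<delta> < b - a \<longrightarrow>
      real (cover_num (E \<inter> {a..b}) \<delta>) \<le> c * (\<delta> / (b - a)) powr (-s))}"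

definition assouad_spec :: "real set \<Rightarrow> real \<Rightarrow> real" where
  "assouad_spec E \<theta> = Inf {s. s > 0 \<and> (\<exists>c. \<forall>\<delta> a b. 0 < \<delta> \<and> \<delta> < 1 \<and> a < b \<and>
      b - a \<ge> \<delta> powr \<theta> \<longrightarrow>
      real (cover_num (E \<inter> {a..b}) \<delta>) \<le> c * (\<delta> / (b - a)) powr (-s))}"

definition qassouad_dim :: "real set \<Rightarrow> real" where
  "qassouad_dim E = Lim (at_left 1) (assouad_spec E)"

definition qA_regular :: "real set \<Rightarrow> bool" where
  "qA_regular E \<longleftrightarrow> qassouad_dim E = 0 \<or>
     (\<forall>\<theta>. 1 - minkowski_dim E / qassouad_dim E < \<theta> \<and> \<theta> < 1 \<longrightarrow>
        assouad_spec E \<theta> = qassouad_dim E)"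

definition circ_avg :: "(real^2 \<Rightarrow> real) \<Rightarrow> real^2 \<Rightarrow> real \<Rightarrow> real" where
  "circ_avg f x t = (1 / (2 * pi)) *
     (LINT s:{0..2*pi}|lborel. f (x - t *\<^sub>R vector [cos s, sin s]))"

definition sph_max :: "real set \<Rightarrow> (real^2 \<Rightarrow> real) \<Rightarrow> real^2 \<Rightarrow> ennreal" where
  "sph_max E f x = (SUP t\<in>E. ennreal \<bar>circ_avg f x t\<bar>)"

definition radial :: "(real^2 \<Rightarrow> real) \<Rightarrow> bool" where
  "radial f \<longleftrightarrow> (\<exists>g. \<forall>x. f x = g (norm x))"

definition epowr :: "ennreal \<Rightarrow> real \<Rightarrow> ennreal" where
  "epowr x a = (if x = \<infinity> then \<infinity> else ennreal (enn2real x powr a))"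

text \<open>Lebesgue outer measure on R^2 (so that no measurability of the maximal function is needed).\<close>
definition outer_lmeasure :: "(real^2) set \<Rightarrow> ennreal" where
  "outer_lmeasure S = (INF A\<in>{A \<in> sets lebesgue. S \<subseteq> A}. emeasure lebesgue A)"

definition distf :: "(real^2 \<Rightarrow> ennreal) \<Rightarrow> real \<Rightarrow> ennreal" where
  "distf g s = outer_lmeasure {x. ennreal s < g x}"

definition lorentz_p1 :: "real \<Rightarrow> (real^2 \<Rightarrow> ennreal) \<Rightarrow> ennreal" where
  "lorentz_p1 p g = ennreal p * (\<integral>\<^sup>+ s. epowr (distf g s) (1 / p) * indicator {0<..} s \<partial>lborel)"

definition weak_norm :: "real \<Rightarrow> (real^2 \<Rightarrow> ennreal) \<Rightarrow> ennreal" where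
  "weak_norm q g = (SUP s\<in>{0<..}. ennreal s * epowr (distf g s) (1 / q))"

text \<open>L^p norm with exponent given as u = 1/p in [0,1] (u = 0 is p = \<infinity>, the essential sup);
  for u > 0 via the layer-cake formula ||g||_p^p = p \<integral>_0^\<infinity> s^{p-1} |{|g|>s}| ds.\<close>
definition lp_norm :: "real \<Rightarrow> (real^2 \<Rightarrow> ennreal) \<Rightarrow> ennreal" where
  "lp_norm u g = (if u = 0 then Inf {ennreal s | s. 0 \<le> s \<and> distf g s = 0}
     else epowr (\<integral>\<^sup>+ s. ennreal ((1 / u) * s powr (1 / u - 1)) * distf g s * indicator {0<..} s \<partial>lborel) u)"

definition rad_restricted_weak :: "real set \<Rightarrow> real \<Rightarrow> real \<Rightarrow> bool" where
  "rad_restricted_weak E p q \<longleftrightarrow> (\<exists>C::real. \<forall>f. f \<in> borel_measurable borel \<and> radial f \<and>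
      lorentz_p1 p (\<lambda>x. ennreal \<bar>f x\<bar>) < \<infinity> \<longrightarrow>
      weak_norm q (sph_max E f) \<le> ennreal C * lorentz_p1 p (\<lambda>x. ennreal \<bar>f x\<bar>))"

definition T_rad :: "real set \<Rightarrow> (real \<times> real) set" where
  "T_rad E = {(u, v). 0 \<le> u \<and> u \<le> 1 \<and> 0 \<le> v \<and> v \<le> 1 \<and>
     (\<exists>C::real. \<forall>f. f \<in> borel_measurable borel \<and> radial f \<and>
        lp_norm u (\<lambda>x. ennreal \<bar>f x\<bar>) < \<infinity> \<longrightarrow>
        lp_norm v (sph_max E f) \<le> ennreal C * lp_norm u (\<lambda>x. ennreal \<bar>f x\<bar>))}"

definition Q1 :: "real \<Rightarrow> real \<times> real" where "Q1 b = (1 / (1 + b), 1 / (1 + b))"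
definition Q2 :: "real \<Rightarrow> real \<times> real" where "Q2 b = (2 / (3 + b), 1 / (3 + b))"
definition theta_Q :: "real \<Rightarrow> real \<Rightarrow> real" where
  "theta_Q \<beta> \<gamma> = (if \<beta> < 1 then (1 - \<beta>) / (2 * (\<gamma> - \<beta>)) else 1)"
definition Q3 :: "real \<Rightarrow> real \<Rightarrow> real \<times> real" where
  "Q3 \<beta> \<gamma> = (let \<theta> = theta_Q \<beta> \<gamma> in
     ((2 - \<beta> * (1 - \<theta>)) / (2 * (1 + \<gamma> * \<theta>)), 1 / (2 * (1 + \<gamma> * \<theta>))))"
definition quadQ :: "real \<Rightarrow> real \<Rightarrow> (real \<times> real) set" where
  "quadQ \<beta> \<gamma> = convex hull {(0, 0), Q1 \<beta>, Q3 \<beta> \<gamma>, Q2 (2 * \<gamma> - 1)}"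

end

(* All necessary conditions come from testing M_E on indicators of radial sets {x. |x| \<in> S}:
   if from every point of a set T some circle of radius t \<in> E sees the set with average at
   least a, boundedness forces a |T|^(1/q) \<lesssim> |{x. |x| \<in> S}|^(1/p).  Four configurations
   give the four edges of Q(\<beta>, \<gamma>) through Q1, Q3 and Q2: a large disc (1/q \<le> 1/p); a thin
   annulus of radius t \<in> E seen from a small disc about 0 (1/p \<le> 2/q); a \<delta>-disc seen from
   the \<delta>-annuli whose radii form a \<delta>-separated subset of E, which has about \<delta>^(-\<beta>) points;
   and a \<delta>-annulus of radius \<rho> seen from annuli of radii \<rho> - t, t in a separated subset of
   E \<inter> I, whose circles are internally tangent to it along arcs of length about (\<delta>/|I|)^(1/2).
   With |I| \<ge> \<delta>^\<theta> the last configuration is governed by the Assouad spectrum, which is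
   constant for \<theta> > 1 - \<beta>/\<gamma> by quasi-Assouad regularity; letting the exponents tend to the
   dimensions and intersecting the half-planes gives the quadrilateral. *)

theory Submission
  imports Defs
begin

abbreviation dir :: "real \<Rightarrow> real^2" where "dir s \<equiv> vector [cos s, sin s]"

lemma norm_vec2_squared: "(norm (x::real^2))^2 = (x$1)^2 + (x$2)^2"
  by (simp add: norm_eq_sqrt_inner inner_vec_def sum_2 power2_eq_square)

lemma norm_dir [simp]: "norm (dir s) = 1"
  by (simp add: norm_eq_sqrt_inner inner_vec_def sum_2 flip: power2_eq_square)

lemma vec2_polar_form:
  assumes "(x::real^2) \<noteq> 0"
  obtains c where "0 \<le> c" "c < 2*pi" "x$1 = norm x * cos c" "x$2 = norm x * sin c"
proof -
  have n: "norm x > 0" using assms by simp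
  have "(x$1 / norm x)^2 + (x$2 / norm x)^2 = 1"
    using n by (simp add: power_divide norm_vec2_squared[symmetric] add_divide_distrib[symmetric])
  then obtain c where "0 \<le> c" "c < 2*pi" "x$1 / norm x = cos c" "x$2 / norm x = sin c"
    by (rule sincos_total_2pi)
  with that n show ?thesis by (auto simp: field_simps)
qed

lemma norm_diff_dir_squared:
  assumes "(x::real^2)$1 = r * cos c" "x$2 = r * sin c"
  shows "(norm (x - t *\<^sub>R dir s))^2 = r^2 + t^2 - 2 * t * r * cos (s - c)"
proof -
  have "(norm (x - t *\<^sub>R dir s))^2 = (x$1 - t * cos s)^2 + (x$2 - t * sin s)^2"
    by (simp add: norm_vec2_squared)
  also have "\<dots> = r^2 * ((cos c)^2 + (sin c)^2) + t^2 * ((cos s)^2 + (sin s)^2)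
      - 2 * t * r * (cos s * cos c + sin s * sin c)"
    unfolding assms by algebra
  finally show ?thesis by (simp add: cos_diff)
qed

lemma one_minus_cos_le: "1 - cos (y::real) \<le> y^2 / 2"
proof -
  have "cos y = 1 - 2 * (sin (y/2))^2" using cos_double_sin[of "y/2"] by simp
  moreover have "(sin (y/2))^2 \<le> (y/2)^2"
    using abs_sin_x_le_abs_x[of "y/2"] by (metis abs_ge_zero power2_abs power_mono)
  ultimately show ?thesis by (simp add: power_divide)
qed

lemma borel_measurable_dir: "dir \<in> borel_measurable borel"
proof -
  have "dir = (\<lambda>s. cos s *\<^sub>R axis 1 1 + sin s *\<^sub>R axis 2 1)"
    by (auto simp: vec_eq_iff forall_2 axis_def)
  moreover have "continuous_on UNIV (\<lambda>s::real. cos s *\<^sub>R (axis 1 1 :: real^2) + sin s *\<^sub>R axis 2 1)"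
    by (intro continuous_intros)
  ultimately show ?thesis by (simp only: borel_measurable_continuous_onI)
qed

lemma circ_avg_indicator_ge:
  assumes A: "A \<in> sets borel" and lohi: "0 \<le> lo" "lo \<le> hi" "hi \<le> 2*pi"
    and inA: "\<And>s. lo \<le> s \<Longrightarrow> s \<le> hi \<Longrightarrow> x - t *\<^sub>R dir s \<in> A"
  shows "(hi - lo) / (2*pi) \<le> circ_avg (indicator A) x t"
proof -
  let ?g = "\<lambda>s. indicator {0..2*pi} s *\<^sub>R indicator A (x - t *\<^sub>R dir s) :: real"
  have "(\<lambda>s. x - t *\<^sub>R dir s) \<in> borel_measurable borel"
    using borel_measurable_dir by measurable
  then have m: "(\<lambda>s. indicator A (x - t *\<^sub>R dir s) :: real) \<in> borel_measurable lborel"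
    using measurable_compose borel_measurable_indicator[OF A] by (simp add: comp_def)
  have int_g: "integrable lborel ?g"
  proof (rule Bochner_Integration.integrable_bound[where f="indicator {0..2*pi} :: real \<Rightarrow> real"])
    show "integrable lborel (indicator {0..2*pi} :: real \<Rightarrow> real)"
      by (intro integrable_real_indicator) auto
    show "?g \<in> borel_measurable lborel" using m by simp
    show "AE s in lborel. norm (?g s) \<le> norm (indicator {0..2*pi} s :: real)"
      by (auto simp: indicator_def)
  qed
  have "hi - lo = integral\<^sup>L lborel (indicator {lo..hi} :: real \<Rightarrow> real)"
    using lohi by simp
  also have "\<dots> \<le> integral\<^sup>L lborel ?g"
  proof (rule integral_mono[OF _ int_g])
    show "integrable lborel (indicator {lo..hi} :: real \<Rightarrow> real)"
      using lohi by (intro integrable_real_indicator) auto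
    show "indicator {lo..hi} s \<le> ?g s" for s
      using lohi inA[of s] by (auto simp: indicator_def)
  qed
  finally have "hi - lo \<le> (LINT s:{0..2*pi}|lborel. indicator A (x - t *\<^sub>R dir s))"
    by (simp add: set_lebesgue_integral_def)
  then show ?thesis
    unfolding circ_avg_def by (simp add: divide_right_mono)
qed

lemma circ_avg_indicator_ge_arc:
  assumes A: "A \<in> sets borel" and c: "0 \<le> c" "c < 2*pi" and w: "0 < w" "w \<le> pi"
    and inA: "\<And>s. c - w \<le> s \<Longrightarrow> s \<le> c + w \<Longrightarrow> x - t *\<^sub>R dir s \<in> A"
  shows "w / (2*pi) \<le> circ_avg (indicator A) x t"
proof -
  have "(min (2*pi) (c+w) - max 0 (c-w)) / (2*pi) \<le> circ_avg (indicator A) x t"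
    by (rule circ_avg_indicator_ge[OF A]) (use c w inA in auto)
  moreover have "w \<le> min (2*pi) (c+w) - max 0 (c-w)" using c w by auto
  ultimately show ?thesis by (smt (verit) divide_right_mono pi_gt_zero)
qed

definition radial_set :: "real set \<Rightarrow> (real^2) set" where
  "radial_set S = {x. norm x \<in> S}"

lemma radial_set_atMost: "radial_set {..r} = cball 0 r"
  by (auto simp: radial_set_def)

lemma sets_radial_set: "S \<in> sets borel \<Longrightarrow> radial_set S \<in> sets borel"
  unfolding radial_set_def using borel_measurable_norm[THEN measurable_sets, of S]
  by (simp add: vimage_def)

lemma sets_lebesgue_radial_set: "S \<in> sets borel \<Longrightarrow> radial_set S \<in> sets lebesgue"
  using sets_radial_set by (metis sets_completionI_sets sets_lborel)

lemma radial_indicator_radial_set: "radial (indicator (radial_set S) :: real^2 \<Rightarrow> real)"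
  unfolding radial_def radial_set_def by (intro exI[of _ "indicator S"]) (simp add: indicator_def)

lemma emeasure_cball_vec2: "r \<ge> 0 \<Longrightarrow> emeasure lborel (cball (0::real^2) r) = ennreal (pi * r^2)"
  by (simp add: emeasure_cball unit_ball_vol_2)

lemma emeasure_ball_vec2: "r \<ge> 0 \<Longrightarrow> emeasure lborel (ball (0::real^2) r) = ennreal (pi * r^2)"
  by (simp add: emeasure_ball unit_ball_vol_2)

lemma emeasure_open_annulus:
  assumes "0 \<le> r1" "r1 \<le> r2"
  shows "emeasure lebesgue (radial_set {r1<..<r2}) = ennreal (pi * (r2^2 - r1^2))"
proof -
  have eq: "radial_set {r1<..<r2} = ball 0 r2 - cball 0 r1"
    by (auto simp: radial_set_def)
  have "emeasure lebesgue (ball (0::real^2) r2 - cball 0 r1)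
      = emeasure lebesgue (ball (0::real^2) r2) - emeasure lebesgue (cball (0::real^2) r1)"
  proof (cases "r1 = r2")
    case True
    then have "ball (0::real^2) r2 - cball 0 r1 = {}" by auto
    with True assms show ?thesis
      by (simp only:) (simp add: emeasure_ball emeasure_cball)
  next
    case False
    with assms show ?thesis
      by (intro emeasure_Diff) (auto simp: emeasure_cball unit_ball_vol_2 subset_iff)
  qed
  with assms show ?thesis
    by (simp add: eq emeasure_ball emeasure_cball unit_ball_vol_2 ennreal_minus[symmetric]
        right_diff_distrib power_mono)
qed

lemma emeasure_closed_annulus:
  assumes "0 \<le> r1" "r1 \<le> r2"
  shows "emeasure lebesgue (radial_set {r1..r2}) = ennreal (pi * (r2^2 - r1^2))"
proof -
  have eq: "radial_set {r1..r2} = cball 0 r2 - ball 0 r1"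
    by (auto simp: radial_set_def)
  have "emeasure lebesgue (cball (0::real^2) r2 - ball 0 r1)
      = emeasure lebesgue (cball (0::real^2) r2) - emeasure lebesgue (ball (0::real^2) r1)"
    using assms by (intro emeasure_Diff) (auto simp: emeasure_ball unit_ball_vol_2 subset_iff)
  with assms show ?thesis
    by (simp add: eq emeasure_ball emeasure_cball unit_ball_vol_2 ennreal_minus[symmetric]
        right_diff_distrib power_mono)
qed

lemma emeasure_le_outer_lmeasure:
  "T \<in> sets lebesgue \<Longrightarrow> T \<subseteq> S \<Longrightarrow> emeasure lebesgue T \<le> outer_lmeasure S"
  unfolding outer_lmeasure_def by (rule INF_greatest, rule emeasure_mono) auto

lemma outer_lmeasure_le_emeasure:
  "A \<in> sets lebesgue \<Longrightarrow> S \<subseteq> A \<Longrightarrow> outer_lmeasure S \<le> emeasure lebesgue A"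
  unfolding outer_lmeasure_def by (rule INF_lower) auto

lemma outer_lmeasure_mono: "S \<subseteq> S' \<Longrightarrow> outer_lmeasure S \<le> outer_lmeasure S'"
  unfolding outer_lmeasure_def by (rule INF_mono) auto

lemma outer_lmeasure_empty [simp]: "outer_lmeasure {} = 0"
  using outer_lmeasure_le_emeasure[of "{}" "{}"] by simp

lemma distf_antimono: "s \<le> s' \<Longrightarrow> distf g s' \<le> distf g s"
  unfolding distf_def by (rule outer_lmeasure_mono) (auto intro: le_less_trans ennreal_leI)

lemma ennreal_powr_le_epowr:
  assumes "0 \<le> X" "ennreal X \<le> I" "v > 0"
  shows "ennreal (X powr v) \<le> epowr I v"
proof (cases "I = \<infinity>")
  case False
  with assms have "X \<le> enn2real I"
    using enn2real_mono[of "ennreal X" I] by (simp add: top.not_eq_extremum)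
  with assms False show ?thesis
    by (simp add: epowr_def ennreal_leI powr_mono2)
qed (simp add: epowr_def)

lemma epowr_le_ennreal_powr:
  assumes "0 \<le> X" "I \<le> ennreal X" "v > 0"
  shows "epowr I v \<le> ennreal (X powr v)"
proof -
  have "I < \<infinity>" using assms(2) by (rule le_less_trans) simp
  then have fin: "I \<noteq> \<infinity>" by simp
  with assms have "enn2real I \<le> X"
    using enn2real_mono[of I "ennreal X"] by simp
  with assms fin show ?thesis
    by (simp add: epowr_def ennreal_leI powr_mono2)
qed

lemma lp_norm_0_ge_level:
  assumes "ennreal m \<le> distf g a" "m > 0" "a > 0"
  shows "ennreal a \<le> lp_norm 0 g"
proof -
  have "ennreal a \<le> ennreal s" if "0 \<le> s" "distf g s = 0" for s
  proof (rule ennreal_leI, rule ccontr)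
    assume "\<not> a \<le> s"
    then have "distf g a \<le> distf g s" by (intro distf_antimono) simp
    with assms that show False by (metis ennreal_eq_0_iff le_zero_eq not_le)
  qed
  then show ?thesis
    unfolding lp_norm_def by (auto intro!: Inf_greatest)
qed

lemma lp_norm_pos_ge_level:
  assumes m: "ennreal m \<le> distf g a" "m > 0" and a: "a > 0" and v: "0 < v" "v \<le> 1"
  shows "ennreal (a/2 * m powr v) \<le> lp_norm v g"
proof -
  let ?w = "\<lambda>s. ennreal ((1 / v) * s powr (1 / v - 1)) * distf g s * indicator {0<..} s"
  let ?c = "(a/2) powr (1/v - 1) * m"
  have "ennreal ?c * indicator {a/2<..a} s \<le> ?w s" for s
  proof (cases "s \<in> {a/2<..a}")
    case True
    have "(a/2) powr (1/v - 1) \<le> s powr (1/v - 1)"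
      using True a v by (intro powr_mono2) (auto simp: field_simps)
    also have "\<dots> = 1 * s powr (1/v - 1)" by simp
    also have "\<dots> \<le> (1/v) * s powr (1/v - 1)"
      using v by (intro mult_right_mono) (auto simp: field_simps)
    finally have "ennreal ((a/2) powr (1/v - 1)) \<le> ennreal ((1/v) * s powr (1/v - 1))"
      by (rule ennreal_leI)
    moreover have "ennreal m \<le> distf g s" using m(1) distf_antimono[of s a g] True by auto
    ultimately show ?thesis
      using True a m by (auto simp: ennreal_mult intro!: mult_mono)
  qed simp
  then have "ennreal ?c * emeasure lborel {a/2<..a} \<le> (\<integral>\<^sup>+ s. ?w s \<partial>lborel)"
    by (subst nn_integral_cmult_indicator[symmetric]) (auto intro: nn_integral_mono)
  moreover have "ennreal ?c * emeasure lborel {a/2<..a} = ennreal ((a/2) powr (1/v) * m)"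
    using a m by (simp add: ennreal_mult[symmetric] powr_diff field_simps)
  ultimately have "ennreal (((a/2) powr (1/v) * m) powr v) \<le> epowr (\<integral>\<^sup>+ s. ?w s \<partial>lborel) v"
    using a m v by (intro ennreal_powr_le_epowr) auto
  moreover have "((a/2) powr (1/v) * m) powr v = a/2 * m powr v"
    using a m v by (simp add: powr_mult powr_powr)
  ultimately show ?thesis
    using v by (simp add: lp_norm_def)
qed

lemma lp_norm_ge_level:
  assumes "ennreal m \<le> distf g a" "m > 0" "a > 0" "0 \<le> v" "v \<le> 1"
  shows "ennreal (a * m powr v) \<le> 2 * lp_norm v g"
proof (cases "v = 0")
  case True
  with lp_norm_0_ge_level[OF assms(1-3)] assms show ?thesis
    by (simp add: order.trans[OF _ add_increasing] mult_2)
next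
  case False
  with assms have "ennreal (a/2 * m powr v) \<le> lp_norm v g"
    by (intro lp_norm_pos_ge_level) auto
  then have "ennreal 2 * ennreal (a/2 * m powr v) \<le> ennreal 2 * lp_norm v g"
    by (rule mult_left_mono) simp
  moreover have "ennreal (a * m powr v) = ennreal 2 * ennreal (a/2 * m powr v)"
    using assms by (subst ennreal_mult[symmetric]) auto
  ultimately show ?thesis by simp
qed

lemma weak_norm_ge_level:
  assumes "ennreal m \<le> distf g a" "m > 0" "a > 0" "q > 0"
  shows "ennreal (a * m powr (1/q)) \<le> weak_norm q g"
proof -
  have "ennreal (a * m powr (1/q)) = ennreal a * ennreal (m powr (1/q))"
    using assms by (simp add: ennreal_mult)
  also have "\<dots> \<le> ennreal a * epowr (distf g a) (1/q)"
    using ennreal_powr_le_epowr[OF _ assms(1), of "1/q"] assms by (intro mult_left_mono) auto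
  also have "\<dots> \<le> weak_norm q g"
    unfolding weak_norm_def using assms by (intro SUP_upper2[where i=a]) auto
  finally show ?thesis .
qed

lemma distf_indicator_le:
  assumes "A \<in> sets lebesgue" "emeasure lebesgue A \<le> ennreal M"
  shows "distf (\<lambda>x. ennreal \<bar>indicator A x :: real\<bar>) s \<le> ennreal M"
proof -
  have "{x. ennreal s < ennreal \<bar>indicator A x :: real\<bar>} \<subseteq> A"
    by (auto simp: indicator_def)
  with assms show ?thesis
    unfolding distf_def using outer_lmeasure_le_emeasure order.trans by blast
qed

lemma distf_indicator_eq_0: "s \<ge> 1 \<Longrightarrow> distf (\<lambda>x. ennreal \<bar>indicator A x :: real\<bar>) s = 0"
  unfolding distf_def by (auto simp: indicator_def ennreal_less_iff)

lemma lp_norm_indicator_le: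
  assumes A: "A \<in> sets lebesgue" "emeasure lebesgue A \<le> ennreal M" and M: "M > 0"
    and u: "0 \<le> u" "u \<le> 1"
  shows "lp_norm u (\<lambda>x. ennreal \<bar>indicator A x :: real\<bar>)
    \<le> ennreal ((if u = 0 then 1 else (1/u) powr u) * M powr u)"
proof (cases "u = 0")
  case True
  have "Inf {ennreal s | s. 0 \<le> s \<and> distf (\<lambda>x. ennreal \<bar>indicator A x :: real\<bar>) s = 0} \<le> ennreal 1"
    by (rule Inf_lower) (use distf_indicator_eq_0[of 1] in auto)
  with True M show ?thesis by (simp add: lp_norm_def)
next
  case False
  with u have up: "u > 0" by simp
  let ?g = "\<lambda>x. ennreal \<bar>indicator A x :: real\<bar>"
  have pointwise: "ennreal ((1 / u) * s powr (1 / u - 1)) * distf ?g s * indicator {0<..} s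
      \<le> ennreal (M / u) * indicator {0<..<1} s" for s
  proof (cases "0 < s \<and> s < 1")
    case True
    have "s powr (1/u - 1) \<le> 1" using True up u by (intro powr_le1) (auto simp: field_simps)
    then have "(1 / u) * s powr (1 / u - 1) \<le> 1/u" using up by (simp add: divide_right_mono)
    then have "ennreal ((1 / u) * s powr (1 / u - 1)) * distf ?g s \<le> ennreal (1/u) * ennreal M"
      by (intro mult_mono) (use distf_indicator_le[OF A] in \<open>auto intro: ennreal_leI\<close>)
    with True up M show ?thesis by (simp add: ennreal_mult[symmetric])
  next
    case False
    then show ?thesis using distf_indicator_eq_0[of s A] by (cases "s \<le> 0") (auto simp: not_le)
  qed
  have "(\<integral>\<^sup>+ s. ennreal ((1 / u) * s powr (1 / u - 1)) * distf ?g s * indicator {0<..} s \<partial>lborel)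
      \<le> (\<integral>\<^sup>+ s. ennreal (M / u) * indicator {0<..<1::real} s \<partial>lborel)"
    by (intro nn_integral_mono pointwise)
  also have "\<dots> = ennreal (M / u)" by (simp add: nn_integral_cmult_indicator)
  finally have "lp_norm u ?g \<le> ennreal ((M/u) powr u)"
    using epowr_le_ennreal_powr[of "M/u"] M up by (simp add: lp_norm_def)
  with False M up show ?thesis by (simp add: powr_divide)
qed

lemma lorentz_p1_indicator_le:
  assumes A: "A \<in> sets lebesgue" "emeasure lebesgue A \<le> ennreal M" and M: "M > 0" and p: "p > 0"
  shows "lorentz_p1 p (\<lambda>x. ennreal \<bar>indicator A x :: real\<bar>) \<le> ennreal (p * M powr (1/p))"
proof -
  let ?g = "\<lambda>x. ennreal \<bar>indicator A x :: real\<bar>"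
  have pointwise: "epowr (distf ?g s) (1 / p) * indicator {0<..} s
      \<le> ennreal (M powr (1/p)) * indicator {0<..<1} s" for s
  proof (cases "0 < s \<and> s < 1")
    case True
    then show ?thesis
      using epowr_le_ennreal_powr[OF _ distf_indicator_le[OF A], of "1/p"] M p by auto
  next
    case False
    then show ?thesis using distf_indicator_eq_0[of s A]
      by (cases "s \<le> 0") (auto simp: not_le epowr_def)
  qed
  have "(\<integral>\<^sup>+ s. epowr (distf ?g s) (1 / p) * indicator {0<..} s \<partial>lborel)
      \<le> (\<integral>\<^sup>+ s. ennreal (M powr (1/p)) * indicator {0<..<1::real} s \<partial>lborel)"
    by (intro nn_integral_mono pointwise)
  also have "\<dots> = ennreal (M powr (1/p))" by (simp add: nn_integral_cmult_indicator)
  finally have "ennreal p * (\<integral>\<^sup>+ s. epowr (distf ?g s) (1 / p) * indicator {0<..} s \<partial>lborel)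
      \<le> ennreal p * ennreal (M powr (1/p))" by (rule mult_left_mono) simp
  with p show ?thesis unfolding lorentz_p1_def by (simp add: ennreal_mult)
qed

section \<open>The radial testing inequality\<close>

lemma emeasure_le_distf_sph_max:
  assumes "T \<in> sets lebesgue" "a > 0" "\<And>x. x \<in> T \<Longrightarrow> \<exists>t\<in>E. a \<le> circ_avg f x t"
  shows "emeasure lebesgue T \<le> distf (sph_max E f) (a/2)"
  unfolding distf_def
proof (rule emeasure_le_outer_lmeasure[OF assms(1)], intro subsetI CollectI)
  fix x assume "x \<in> T"
  then obtain t where t: "t \<in> E" "a \<le> circ_avg f x t" using assms(3) by blast
  have "ennreal (a/2) < ennreal a" using assms by (simp add: ennreal_lessI)
  also have "\<dots> \<le> ennreal (circ_avg f x t)" using t by (intro ennreal_leI)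
  also have "\<dots> \<le> sph_max E f x"
    unfolding sph_max_def using t by (intro SUP_upper2[where i=t]) auto
  finally show "ennreal (a/2) < sph_max E f x" .
qed

text \<open>The pair (u, v) stands for (1/p, 1/q): this is the restricted bound
  a |T|^(1/q) \<le> K |supp f|^(1/p) for f the indicator of a radial set, whenever
  M_E f \<ge> a on T.\<close>

definition radial_testing :: "real set \<Rightarrow> real \<Rightarrow> real \<Rightarrow> real \<Rightarrow> bool" where
  "radial_testing E u v K \<longleftrightarrow> (\<forall>S T M m a.
     S \<in> sets borel \<longrightarrow> emeasure lebesgue (radial_set S) \<le> ennreal M \<longrightarrow> M > 0 \<longrightarrow>
     T \<in> sets lebesgue \<longrightarrow> ennreal m \<le> emeasure lebesgue T \<longrightarrow> m > 0 \<longrightarrow> a > 0 \<longrightarrow>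
     (\<forall>x\<in>T. \<exists>t\<in>E. a \<le> circ_avg (indicator (radial_set S)) x t) \<longrightarrow>
     a * m powr v \<le> K * M powr u)"

lemma radial_testingD:
  assumes "radial_testing E u v K"
    and "S \<in> sets borel" "emeasure lebesgue (radial_set S) \<le> ennreal M" "M > 0"
    and "T \<in> sets lebesgue" "ennreal m \<le> emeasure lebesgue T" "m > 0" "a > 0"
    and "\<And>x. x \<in> T \<Longrightarrow> \<exists>t\<in>E. a \<le> circ_avg (indicator (radial_set S)) x t"
  shows "a * m powr v \<le> K * M powr u"
  using assms unfolding radial_testing_def by blast

lemma radial_testing_of_bounded:
  fixes Nin Nout :: "(real^2 \<Rightarrow> ennreal) \<Rightarrow> ennreal"
  assumes bounded: "\<And>f. f \<in> borel_measurable borel \<Longrightarrow> radial f \<Longrightarrow> Nin (\<lambda>x. ennreal \<bar>f x\<bar>) < \<infinity>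
      \<Longrightarrow> Nout (sph_max E f) \<le> ennreal C * Nin (\<lambda>x. ennreal \<bar>f x\<bar>)"
    and Nin_indicator: "\<And>A M. A \<in> sets lebesgue \<Longrightarrow> emeasure lebesgue A \<le> ennreal M \<Longrightarrow> M > 0
      \<Longrightarrow> Nin (\<lambda>x. ennreal \<bar>indicator A x :: real\<bar>) \<le> ennreal (c * M powr u)"
    and Nout_level: "\<And>g a m. ennreal m \<le> distf g a \<Longrightarrow> m > 0 \<Longrightarrow> a > 0
      \<Longrightarrow> ennreal (a * m powr v) \<le> ennreal c' * Nout g"
    and c: "c \<ge> 0" "c' \<ge> 0"
  shows "radial_testing E u v (2 * c' * max C 0 * c)"
  unfolding radial_testing_def
proof (intro allI impI)
  fix S T M m a
  assume S: "S \<in> sets borel" and M: "emeasure lebesgue (radial_set S) \<le> ennreal M" "M > 0"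
    and T: "T \<in> sets lebesgue" "ennreal m \<le> emeasure lebesgue T" and m: "m > 0" and a: "a > 0"
    and avg: "\<forall>x\<in>T. \<exists>t\<in>E. a \<le> circ_avg (indicator (radial_set S)) x t"
  let ?f = "indicator (radial_set S) :: real^2 \<Rightarrow> real"
  have Nin: "Nin (\<lambda>x. ennreal \<bar>?f x\<bar>) \<le> ennreal (c * M powr u)"
    using Nin_indicator[OF sets_lebesgue_radial_set[OF S] M] .
  have "emeasure lebesgue T \<le> distf (sph_max E ?f) (a/2)"
    using T(1) a avg by (intro emeasure_le_distf_sph_max) auto
  with T(2) have "ennreal m \<le> distf (sph_max E ?f) (a/2)" by (rule order.trans)
  then have "ennreal (a/2 * m powr v) \<le> ennreal c' * Nout (sph_max E ?f)"
    using m a by (intro Nout_level) auto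
  also have "\<dots> \<le> ennreal c' * (ennreal C * Nin (\<lambda>x. ennreal \<bar>?f x\<bar>))"
  proof (intro mult_left_mono bounded)
    show "?f \<in> borel_measurable borel"
      using S by (intro borel_measurable_indicator sets_radial_set)
    show "Nin (\<lambda>x. ennreal \<bar>?f x\<bar>) < \<infinity>"
      using Nin by (rule le_less_trans) simp
  qed (simp_all add: radial_indicator_radial_set)
  also have "\<dots> \<le> ennreal c' * (ennreal (max C 0) * ennreal (c * M powr u))"
    using Nin by (intro mult_left_mono mult_mono) (auto intro: ennreal_leI)
  also have "\<dots> = ennreal (c' * max C 0 * c * M powr u)"
    using c by (simp add: ennreal_mult mult.assoc)
  finally have "a/2 * m powr v \<le> c' * max C 0 * c * M powr u"
    using c by (subst (asm) ennreal_le_iff) auto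
  then show "a * m powr v \<le> 2 * c' * max C 0 * c * M powr u"
    by simp
qed

lemma T_rad_imp_radial_testing:
  assumes "(u, v) \<in> T_rad E"
  shows "\<exists>K. radial_testing E u v K"
proof -
  from assms obtain C where uv: "0 \<le> u" "u \<le> 1" "0 \<le> v" "v \<le> 1"
    and bounded: "\<And>f. f \<in> borel_measurable borel \<Longrightarrow> radial f \<Longrightarrow> lp_norm u (\<lambda>x. ennreal \<bar>f x\<bar>) < \<infinity>
      \<Longrightarrow> lp_norm v (sph_max E f) \<le> ennreal C * lp_norm u (\<lambda>x. ennreal \<bar>f x\<bar>)"
    unfolding T_rad_def by auto
  have "radial_testing E u v (2 * 2 * max C 0 * (if u = 0 then 1 else (1/u) powr u))"
    using uv by (intro radial_testing_of_bounded[where Nin="lp_norm u" and Nout="lp_norm v", OF bounded] lp_norm_indicator_le)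
      (auto simp: lp_norm_ge_level)
  then show ?thesis ..
qed

lemma rad_restricted_weak_imp_radial_testing:
  assumes "rad_restricted_weak E p q" "p > 0" "q > 0"
  shows "\<exists>K. radial_testing E (1/p) (1/q) K"
proof -
  from assms obtain C where
    bounded: "\<And>f. f \<in> borel_measurable borel \<Longrightarrow> radial f \<Longrightarrow> lorentz_p1 p (\<lambda>x. ennreal \<bar>f x\<bar>) < \<infinity>
      \<Longrightarrow> weak_norm q (sph_max E f) \<le> ennreal C * lorentz_p1 p (\<lambda>x. ennreal \<bar>f x\<bar>)"
    unfolding rad_restricted_weak_def by auto
  have "radial_testing E (1/p) (1/q) (2 * 1 * max C 0 * p)"
    using assms by (intro radial_testing_of_bounded[where Nin="lorentz_p1 p" and Nout="weak_norm q", OF bounded] lorentz_p1_indicator_le)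
      (auto simp: weak_norm_ge_level)
  then show ?thesis ..
qed

section \<open>Separated sets, covering numbers and dimensions\<close>

definition separated :: "real \<Rightarrow> real set \<Rightarrow> bool" where
  "separated \<delta> P \<longleftrightarrow> (\<forall>p\<in>P. \<forall>q\<in>P. p \<noteq> q \<longrightarrow> \<delta> \<le> \<bar>p - q\<bar>)"

lemma separated_insert:
  "separated \<delta> (insert y P) \<longleftrightarrow> separated \<delta> P \<and> (\<forall>p\<in>P. p \<noteq> y \<longrightarrow> \<delta> \<le> \<bar>y - p\<bar>)"
  unfolding separated_def by (auto simp: abs_minus_commute)

lemma card_separated_le:
  assumes "finite P" "P \<subseteq> {x0..x0+L}" "separated \<delta> P" "\<delta> > 0" "L \<ge> 0"
  shows "real (card P) * \<delta> \<le> L + \<delta>"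
proof -
  let ?I = "\<lambda>p. {p..<p+\<delta>}"
  have disj: "disjoint_family_on ?I P"
    unfolding disjoint_family_on_def
  proof (intro ballI impI)
    fix p q assume "p \<in> P" "q \<in> P" "p \<noteq> q"
    with assms(3) have "\<delta> \<le> \<bar>p - q\<bar>" unfolding separated_def by blast
    then show "?I p \<inter> ?I q = {}" by auto
  qed
  have "ennreal (real (card P) * \<delta>) = (\<Sum>p\<in>P. emeasure lborel (?I p))"
    using assms(4) by (simp add: ennreal_of_nat_eq_real_of_nat ennreal_mult)
  also have "\<dots> = emeasure lborel (\<Union>p\<in>P. ?I p)"
    using disj assms(1) by (intro sum_emeasure) auto
  also have "\<dots> \<le> emeasure lborel {x0..x0+L+\<delta>}"
    using assms(2) by (intro emeasure_mono) auto
  also have "\<dots> = ennreal (L + \<delta>)" using assms by simp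
  finally show ?thesis using assms by (subst (asm) ennreal_le_iff) auto
qed

lemma maximal_separated_subset:
  assumes F: "F \<subseteq> {x0..x0+L}" and \<delta>: "\<delta> > 0" and L: "L \<ge> 0"
  obtains P where "finite P" "P \<subseteq> F" "separated \<delta> P" "\<And>y. y \<in> F \<Longrightarrow> \<exists>p\<in>P. \<bar>y - p\<bar> < \<delta>"
proof -
  define PP where "PP = {P. finite P \<and> P \<subseteq> F \<and> separated \<delta> P}"
  define B where "B = nat \<lceil>(L + \<delta>) / \<delta>\<rceil>"
  have bd: "card P \<le> B" if "P \<in> PP" for P
  proof -
    have P: "finite P" "P \<subseteq> F" "separated \<delta> P" using that unfolding PP_def by auto
    have "real (card P) * \<delta> \<le> L + \<delta>"
      by (rule card_separated_le[OF P(1) order.trans[OF P(2) F] P(3) \<delta> L])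
    then have "real (card P) \<le> (L + \<delta>) / \<delta>" using \<delta> by (simp add: field_simps)
    then have "real (card P) \<le> real_of_int \<lceil>(L + \<delta>) / \<delta>\<rceil>" by (meson le_of_int_ceiling order.trans)
    then have "int (card P) \<le> \<lceil>(L + \<delta>) / \<delta>\<rceil>" by linarith
    then show ?thesis unfolding B_def by linarith
  qed
  have "card ` PP \<subseteq> {..B}" using bd by blast
  then have fin: "finite (card ` PP)" by (rule finite_subset) simp
  have "{} \<in> PP" unfolding PP_def separated_def by auto
  then have "Max (card ` PP) \<in> card ` PP" using Max_in[OF fin] by blast
  then obtain P where P: "P \<in> PP" "card P = Max (card ` PP)" by (metis imageE)
  then have P': "finite P" "P \<subseteq> F" "separated \<delta> P" unfolding PP_def by auto
  have "\<exists>p\<in>P. \<bar>y - p\<bar> < \<delta>" if y: "y \<in> F" for y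
  proof (rule ccontr)
    assume "\<not> ?thesis"
    then have far: "\<forall>p\<in>P. \<delta> \<le> \<bar>y - p\<bar>" by auto
    then have "y \<notin> P" using \<delta> by force
    moreover have "insert y P \<in> PP"
      using P' y far unfolding PP_def by (auto simp: separated_insert)
    then have "card (insert y P) \<le> card P"
      using P(2) Max_ge[OF fin] by simp
    ultimately show False using P'(1) by simp
  qed
  then show ?thesis using that P' by blast
qed


lemma cover_num_le_card:
  assumes "finite C" "F \<subseteq> (\<Union>c\<in>C. {c..c+a})"
  shows "cover_num F a \<le> card C"
  unfolding cover_num_def by (rule cInf_lower) (use assms in auto)

lemma cover_num_le_net:
  assumes "finite P" "\<And>y. y \<in> F \<Longrightarrow> \<exists>p\<in>P. \<bar>y - p\<bar> < \<delta>"
  shows "cover_num F \<delta> \<le> 2 * card P"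
proof -
  define C where "C = P \<union> (\<lambda>p. p - \<delta>) ` P"
  have "F \<subseteq> (\<Union>c\<in>C. {c..c+\<delta>})"
  proof
    fix y assume "y \<in> F"
    then obtain p where p: "p \<in> P" "\<bar>y - p\<bar> < \<delta>" using assms(2) by blast
    show "y \<in> (\<Union>c\<in>C. {c..c+\<delta>})"
    proof (cases "y \<le> p")
      case True
      with p have "y \<in> {p - \<delta>..p - \<delta> + \<delta>}" by auto
      with p show ?thesis unfolding C_def by blast
    next
      case False
      with p have "y \<in> {p..p+\<delta>}" by auto
      with p show ?thesis unfolding C_def by blast
    qed
  qed
  moreover have "finite C" using assms(1) by (simp add: C_def)
  ultimately have "cover_num F \<delta> \<le> card C" by (intro cover_num_le_card)
  also have "\<dots> \<le> card P + card ((\<lambda>p. p - \<delta>) ` P)" unfolding C_def by (rule card_Un_le)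
  also have "\<dots> \<le> 2 * card P" using card_image_le[OF assms(1), of "\<lambda>p. p - \<delta>"] by simp
  finally show ?thesis .
qed

lemma cover_num_le_length:
  assumes "F \<subseteq> {x0..x0+L}" "\<delta> > 0" "L \<ge> 0"
  shows "real (cover_num F \<delta>) \<le> 2 * (L + \<delta>) / \<delta>"
proof -
  obtain P where P: "finite P" "P \<subseteq> F" "separated \<delta> P" "\<And>y. y \<in> F \<Longrightarrow> \<exists>p\<in>P. \<bar>y - p\<bar> < \<delta>"
    by (rule maximal_separated_subset[OF assms]) blast
  have "cover_num F \<delta> \<le> 2 * card P" using P(1,4) by (rule cover_num_le_net)
  then have "real (cover_num F \<delta>) \<le> 2 * real (card P)" by linarith
  also have "\<dots> \<le> 2 * (L + \<delta>) / \<delta>"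
  proof -
    have "P \<subseteq> {x0..x0+L}" using P(2) assms(1) by (rule order.trans)
    then have "real (card P) * \<delta> \<le> L + \<delta>" by (rule card_separated_le[OF P(1) _ P(3) assms(2,3)])
    with assms(2) show ?thesis by (simp add: field_simps)
  qed
  finally show ?thesis .
qed

lemma separated_subset_of_cover_num_gt:
  assumes "F \<subseteq> {x0..x0+L}" "\<delta> > 0" "L \<ge> 0" "real (cover_num F \<delta>) > X"
  obtains P where "finite P" "P \<subseteq> F" "separated \<delta> P" "real (card P) > X / 2"
proof -
  obtain P where P: "finite P" "P \<subseteq> F" "separated \<delta> P" "\<And>y. y \<in> F \<Longrightarrow> \<exists>p\<in>P. \<bar>y - p\<bar> < \<delta>"
    by (rule maximal_separated_subset[OF assms(1-3)]) blast
  have "cover_num F \<delta> \<le> 2 * card P" using P(1,4) by (rule cover_num_le_net)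
  with assms(4) have "X < 2 * real (card P)" by linarith
  then show ?thesis by (intro that[OF P(1-3)]) simp
qed

lemma minkowski_dim_bounds:
  assumes E: "E \<subseteq> {1..2}"
  shows "0 \<le> minkowski_dim E" "minkowski_dim E \<le> 1"
proof -
  let ?S = "{s. s > 0 \<and> (\<exists>c. \<forall>\<delta>. 0 < \<delta> \<and> \<delta> < 1 \<longrightarrow> real (cover_num E \<delta>) \<le> c * \<delta> powr (-s))}"
  have "real (cover_num E \<delta>) \<le> 4 * \<delta> powr (-1)" if "0 < \<delta>" "\<delta> < 1" for \<delta>
  proof -
    have "real (cover_num E \<delta>) \<le> 2 * (1 + \<delta>) / \<delta>"
      using E that by (intro cover_num_le_length[of _ 1]) auto
    also have "\<dots> \<le> 4 / \<delta>" using that by (simp add: divide_right_mono)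
    finally show ?thesis using that by (simp add: powr_minus_divide)
  qed
  then have "\<forall>\<delta>. 0 < \<delta> \<and> \<delta> < 1 \<longrightarrow> real (cover_num E \<delta>) \<le> 4 * \<delta> powr (-1)" by blast
  moreover have "(0::real) < 1" by simp
  ultimately have one: "1 \<in> ?S" by blast
  have "bdd_below ?S" by (rule bdd_belowI[of _ 0]) auto
  with one show "minkowski_dim E \<le> 1" unfolding minkowski_dim_def by (rule cInf_lower)
  from one have "?S \<noteq> {}" by blast
  then show "0 \<le> minkowski_dim E" unfolding minkowski_dim_def
    by (rule cInf_greatest) simp
qed

lemma cover_num_large_below_minkowski_dim:
  assumes "0 < s" "s < minkowski_dim E"
  shows "\<exists>\<delta>. 0 < \<delta> \<and> \<delta> < 1 \<and> real (cover_num E \<delta>) > c * \<delta> powr (-s)"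
proof (rule ccontr)
  let ?S = "{s. s > 0 \<and> (\<exists>c. \<forall>\<delta>. 0 < \<delta> \<and> \<delta> < 1 \<longrightarrow> real (cover_num E \<delta>) \<le> c * \<delta> powr (-s))}"
  assume "\<not> ?thesis"
  then have "\<forall>\<delta>. 0 < \<delta> \<and> \<delta> < 1 \<longrightarrow> real (cover_num E \<delta>) \<le> c * \<delta> powr (-s)"
    by (meson not_le)
  then have "s \<in> ?S" using assms by blast
  moreover have "bdd_below ?S" by (rule bdd_belowI[of _ 0]) auto
  ultimately have "minkowski_dim E \<le> s" unfolding minkowski_dim_def by (rule cInf_lower)
  with assms show False by simp
qed

lemma cover_num_large_below_assouad_dim:
  assumes "0 < s" "s < assouad_dim E"
  shows "\<exists>a b \<delta>. a < b \<and> 0 < \<delta> \<and> \<delta> < b - a \<and>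
    real (cover_num (E \<inter> {a..b}) \<delta>) > c * (\<delta> / (b - a)) powr (-s)"
proof (rule ccontr)
  let ?S = "{s. s > 0 \<and> (\<exists>c. \<forall>a b \<delta>. a < b \<and> 0 < \<delta> \<and> \<delta> < b - a \<longrightarrow>
      real (cover_num (E \<inter> {a..b}) \<delta>) \<le> c * (\<delta> / (b - a)) powr (-s))}"
  assume "\<not> ?thesis"
  then have "\<forall>a b \<delta>. a < b \<and> 0 < \<delta> \<and> \<delta> < b - a \<longrightarrow>
      real (cover_num (E \<inter> {a..b}) \<delta>) \<le> c * (\<delta> / (b - a)) powr (-s)"
    by (meson not_le)
  then have "s \<in> ?S" using assms by blast
  moreover have "bdd_below ?S" by (rule bdd_belowI[of _ 0]) auto
  ultimately have "assouad_dim E \<le> s" unfolding assouad_dim_def by (rule cInf_lower)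
  with assms show False by simp
qed

lemma cover_num_large_below_assouad_spec:
  assumes "0 < s" "s < assouad_spec E \<theta>"
  shows "\<exists>\<delta> a b. 0 < \<delta> \<and> \<delta> < 1 \<and> a < b \<and> b - a \<ge> \<delta> powr \<theta> \<and>
     real (cover_num (E \<inter> {a..b}) \<delta>) > c * (\<delta> / (b - a)) powr (-s)"
proof (rule ccontr)
  let ?S = "{s. s > 0 \<and> (\<exists>c. \<forall>\<delta> a b. 0 < \<delta> \<and> \<delta> < 1 \<and> a < b \<and> b - a \<ge> \<delta> powr \<theta> \<longrightarrow>
      real (cover_num (E \<inter> {a..b}) \<delta>) \<le> c * (\<delta> / (b - a)) powr (-s))}"
  assume "\<not> ?thesis"
  then have "\<forall>\<delta> a b. 0 < \<delta> \<and> \<delta> < 1 \<and> a < b \<and> b - a \<ge> \<delta> powr \<theta> \<longrightarrow>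
      real (cover_num (E \<inter> {a..b}) \<delta>) \<le> c * (\<delta> / (b - a)) powr (-s)"
    by (meson not_le)
  then have "s \<in> ?S" using assms by blast
  moreover have "bdd_below ?S" by (rule bdd_belowI[of _ 0]) auto
  ultimately have "assouad_spec E \<theta> \<le> s" unfolding assouad_spec_def by (rule cInf_lower)
  with assms show False by simp
qed

lemma assouad_spec_le_1:
  assumes E: "E \<subseteq> {1..2}" and \<theta>: "0 \<le> \<theta>" "\<theta> \<le> 1"
  shows "assouad_spec E \<theta> \<le> 1"
proof -
  let ?S = "{s. s > 0 \<and> (\<exists>c. \<forall>\<delta> a b. 0 < \<delta> \<and> \<delta> < 1 \<and> a < b \<and> b - a \<ge> \<delta> powr \<theta> \<longrightarrow>
      real (cover_num (E \<inter> {a..b}) \<delta>) \<le> c * (\<delta> / (b - a)) powr (-s))}"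
  have "real (cover_num (E \<inter> {a..b}) \<delta>) \<le> 4 * (\<delta> / (b - a)) powr (-1)"
    if \<delta>: "0 < \<delta>" "\<delta> < 1" "a < b" "b - a \<ge> \<delta> powr \<theta>" for \<delta> a b
  proof -
    have "\<delta> powr 1 \<le> \<delta> powr \<theta>" using \<delta> \<theta> by (intro powr_mono') auto
    with \<delta> have \<delta>_le: "\<delta> \<le> b - a" by simp
    have "real (cover_num (E \<inter> {a..b}) \<delta>) \<le> 2 * ((b - a) + \<delta>) / \<delta>"
      using \<delta> by (intro cover_num_le_length[of _ a]) auto
    also have "\<dots> \<le> 4 * (b - a) / \<delta>" using \<delta> \<delta>_le by (simp add: divide_right_mono)
    finally show ?thesis using \<delta> by (simp add: powr_minus_divide)
  qed
  then have "\<forall>\<delta> a b. 0 < \<delta> \<and> \<delta> < 1 \<and> a < b \<and> b - a \<ge> \<delta> powr \<theta> \<longrightarrow>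
      real (cover_num (E \<inter> {a..b}) \<delta>) \<le> 4 * (\<delta> / (b - a)) powr (-1)" by blast
  moreover have "(0::real) < 1" by simp
  ultimately have one: "1 \<in> ?S" by blast
  have "bdd_below ?S" by (rule bdd_belowI[of _ 0]) auto
  with one show ?thesis unfolding assouad_spec_def by (rule cInf_lower)
qed

lemma nonneg_exponent_of_bounded_near_0:
  fixes e K :: real
  assumes "\<And>\<epsilon>. \<epsilon> > 0 \<Longrightarrow> \<exists>\<delta>. 0 < \<delta> \<and> \<delta> < \<epsilon> \<and> \<delta> powr e \<le> K"
  shows "0 \<le> e"
proof (rule ccontr)
  assume "\<not> 0 \<le> e"
  then have e: "e < 0" by simp
  define \<epsilon> where "\<epsilon> = (\<bar>K\<bar> + 1) powr (1/e)"
  have "\<epsilon> > 0" unfolding \<epsilon>_def by simp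
  then obtain \<delta> where \<delta>: "0 < \<delta>" "\<delta> < \<epsilon>" "\<delta> powr e \<le> K" using assms by blast
  have "\<epsilon> powr e < \<delta> powr e" using \<delta> e by (intro powr_less_mono2_neg) auto
  moreover have "\<epsilon> powr e = \<bar>K\<bar> + 1" unfolding \<epsilon>_def using e by (simp add: powr_powr)
  ultimately show False using \<delta> by linarith
qed

lemma nonpos_exponent_of_bounded_at_top:
  fixes e K :: real
  assumes "\<And>X. X \<ge> 16 \<Longrightarrow> X powr e \<le> K"
  shows "e \<le> 0"
proof (rule ccontr)
  assume "\<not> e \<le> 0"
  then have e: "e > 0" by simp
  define X where "X = max 16 ((\<bar>K\<bar> + 1) powr (1/e))"
  have "(\<bar>K\<bar> + 1) powr (1/e) \<le> X" unfolding X_def by simp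
  then have "((\<bar>K\<bar> + 1) powr (1/e)) powr e \<le> X powr e" using e by (intro powr_mono2) auto
  then have "\<bar>K\<bar> + 1 \<le> X powr e" using e by (simp add: powr_powr)
  moreover have "X powr e \<le> K" using assms[of X] unfolding X_def by simp
  ultimately show False by linarith
qed

lemma nonneg_on_closed_interval:
  fixes f :: "real \<Rightarrow> real"
  assumes "continuous_on {a..b} f" "a < b" "x \<in> {a..b}" "\<And>s. a < s \<Longrightarrow> s < b \<Longrightarrow> 0 \<le> f s"
  shows "0 \<le> f x"
  using continuous_ge_on_closure[of "{a<..<b}" f x 0] assms by simp

section \<open>Test configurations\<close>

lemma circ_avg_ge_1:
  assumes "S \<in> sets borel" "\<And>s. x - t *\<^sub>R dir s \<in> radial_set S"
  shows "1 \<le> circ_avg (indicator (radial_set S)) x t"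
  using circ_avg_indicator_ge[OF sets_radial_set[OF assms(1)], of 0 "2*pi" x t] assms(2) by simp

lemma circ_avg_small_disc:
  assumes t: "1 \<le> t" "t \<le> 2" and \<delta>: "0 < \<delta>" "\<delta> \<le> 1/2" and x: "\<bar>norm x - t\<bar> < \<delta>/2"
  shows "\<delta> / (8*pi) \<le> circ_avg (indicator (radial_set {..\<delta>})) x t"
proof -
  define r where "r = norm x"
  have r: "r > 1/2" "r \<le> 3" using t \<delta> x unfolding r_def abs_less_iff by linarith+
  then have "x \<noteq> 0" unfolding r_def by auto
  then obtain c where c: "0 \<le> c" "c < 2*pi" "x$1 = r * cos c" "x$2 = r * sin c"
    unfolding r_def by (rule vec2_polar_form)
  define w where "w = \<delta>/4"
  have w: "0 < w" "w \<le> pi" using \<delta> pi_gt3 unfolding w_def by auto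
  have "\<delta> / 4 / (2*pi) \<le> circ_avg (indicator (radial_set {..\<delta>})) x t"
    unfolding w_def[symmetric]
  proof (rule circ_avg_indicator_ge_arc[OF _ c(1,2) w])
    show "radial_set {..\<delta>} \<in> sets borel" by (rule sets_radial_set) simp
    fix s assume s: "c - w \<le> s" "s \<le> c + w"
    have "(s - c)^2 \<le> w^2" using s w by (intro power2_le_iff_abs_le[THEN iffD2]) auto
    then have cs: "1 - cos (s - c) \<le> w^2 / 2" using one_minus_cos_le[of "s - c"] by linarith
    have "(norm (x - t *\<^sub>R dir s))^2 = (r - t)^2 + 2 * (t * r) * (1 - cos (s - c))"
      unfolding norm_diff_dir_squared[OF c(3,4)] by (simp add: power2_eq_square algebra_simps)
    moreover have "2 * (t * r) * (1 - cos (s - c)) \<le> 2 * 6 * (w^2 / 2)"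
      using t r cs by (intro mult_mono) (auto intro: mult_mono[of t 2 r 3, simplified])
    moreover have "(r - t)^2 \<le> (\<delta>/2)^2" using x unfolding r_def[symmetric]
      by (intro power2_le_iff_abs_le[THEN iffD2]) (use \<delta> in auto)
    ultimately have "(norm (x - t *\<^sub>R dir s))^2 \<le> (\<delta>/2)^2 + 6 * w^2" by linarith
    also have "\<dots> \<le> \<delta>^2" unfolding w_def by (simp add: power2_eq_square field_simps)
    finally have "norm (x - t *\<^sub>R dir s) \<le> \<delta>" using \<delta> by (simp add: power2_le_iff_abs_le)
    then show "x - t *\<^sub>R dir s \<in> radial_set {..\<delta>}" unfolding radial_set_def by simp
  qed
  then show ?thesis by (simp add: field_simps)
qed

text \<open>The circle of radius t about x touches the circle of radius |x| + t \<approx> \<rho> from inside;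
  an arc of angular width of order (\<delta>/R)^(1/2) about the point of tangency stays in the
  \<delta>-annulus because |x| \<le> 3R.\<close>

lemma circ_avg_tangent_annulus:
  assumes t: "1 \<le> t" "t \<le> 2" and \<delta>: "0 < \<delta>" "\<delta> \<le> R/2" and R: "R \<le> 1" and \<rho>: "1 \<le> \<rho>"
    and x: "\<bar>norm x + t - \<rho>\<bar> < \<delta>/2" "norm x \<le> 3 * R" "norm x > 0"
  shows "sqrt (\<delta> / (12*R)) / (2*pi) \<le> circ_avg (indicator (radial_set {\<rho> - \<delta>..\<rho> + \<delta>})) x t"
proof -
  define r where "r = norm x"
  have Rp: "R > 0" using \<delta> by auto
  have r: "r > 0" "r \<le> 3 * R" using x unfolding r_def by auto
  then have "x \<noteq> 0" unfolding r_def by auto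
  then obtain c0 where c0: "0 \<le> c0" "c0 < 2*pi" "x$1 = r * cos c0" "x$2 = r * sin c0"
    unfolding r_def by (rule vec2_polar_form)
  define c where "c = (if c0 < pi then c0 + pi else c0 - pi)"
  have c: "0 \<le> c" "c < 2*pi" using c0 unfolding c_def by auto
  have x_c: "x$1 = (-r) * cos c" "x$2 = (-r) * sin c"
    using c0 unfolding c_def by (auto simp: cos_add sin_add cos_diff sin_diff)
  define w where "w = sqrt (\<delta> / (12*R))"
  have w2: "w^2 = \<delta> / (12*R)" unfolding w_def using \<delta> Rp by simp
  have "w \<le> 1" unfolding w_def using \<delta> Rp by (simp add: field_simps)
  moreover have "0 < w" unfolding w_def using \<delta> Rp by simp
  ultimately have w: "0 < w" "w \<le> pi" using pi_gt3 by linarith+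
  have "w / (2*pi) \<le> circ_avg (indicator (radial_set {\<rho> - \<delta>..\<rho> + \<delta>})) x t"
  proof (rule circ_avg_indicator_ge_arc[OF _ c w])
    show "radial_set {\<rho> - \<delta>..\<rho> + \<delta>} \<in> sets borel" by (rule sets_radial_set) simp
    fix s assume s: "c - w \<le> s" "s \<le> c + w"
    have "(s - c)^2 \<le> w^2" using s w by (intro power2_le_iff_abs_le[THEN iffD2]) auto
    then have cs: "1 - cos (s - c) \<le> w^2 / 2" using one_minus_cos_le[of "s - c"] by linarith
    have cs0: "0 \<le> 1 - cos (s - c)" by simp
    have eq: "(norm (x - t *\<^sub>R dir s))^2 = (r + t)^2 - 2 * (t * r) * (1 - cos (s - c))"
      unfolding norm_diff_dir_squared[OF x_c] by (simp add: power2_eq_square algebra_simps)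
    have "t * r \<le> 2 * (3 * R)" using t r by (intro mult_mono) auto
    then have tr: "0 \<le> t * r" "t * r \<le> 2 * (3 * R)" using t r by auto
    have "2 * (t * r) * (1 - cos (s - c)) \<le> 2 * (2 * (3 * R)) * (w^2 / 2)"
      by (rule mult_mono) (use tr cs cs0 in \<open>auto simp: mult.commute\<close>)
    also have "\<dots> = \<delta> / 2" unfolding w2 using Rp by (simp add: field_simps)
    finally have A: "2 * (t * r) * (1 - cos (s - c)) \<le> \<delta> / 2" .
    have B: "0 \<le> 2 * (t * r) * (1 - cos (s - c))" using tr cs0 by simp
    have rt: "\<rho> - \<delta>/2 < r + t" "r + t < \<rho> + \<delta>/2" using x(1) unfolding r_def abs_less_iff by linarith+
    have "(\<rho> - \<delta>)^2 \<le> (\<rho> - \<delta>/2)^2 - \<delta>/2"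
    proof -
      have "\<delta> * (4 + \<delta>*6) \<le> \<delta> * (\<rho>*8)" using \<delta> R \<rho> by (intro mult_left_mono) auto
      then show ?thesis by (simp add: power2_eq_square field_simps)
    qed
    moreover have "(\<rho> - \<delta>/2)^2 \<le> (r + t)^2"
      by (rule power_mono) (use rt \<delta> R \<rho> in linarith)+
    ultimately have "(\<rho> - \<delta>)^2 \<le> (norm (x - t *\<^sub>R dir s))^2" using A unfolding eq by linarith
    then have "\<rho> - \<delta> \<le> norm (x - t *\<^sub>R dir s)" by (rule power2_le_imp_le) simp
    moreover have "(r + t)^2 \<le> (\<rho> + \<delta>)^2"
      by (rule power_mono) (use rt r t \<delta> in linarith)+
    then have "(norm (x - t *\<^sub>R dir s))^2 \<le> (\<rho> + \<delta>)^2" using B unfolding eq by linarith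
    then have "norm (x - t *\<^sub>R dir s) \<le> \<rho> + \<delta>"
      by (rule power2_le_imp_le) (use \<delta> R \<rho> in linarith)
    ultimately show "x - t *\<^sub>R dir s \<in> radial_set {\<rho> - \<delta>..\<rho> + \<delta>}" unfolding radial_set_def by simp
  qed
  then show ?thesis unfolding w_def .
qed

lemma emeasure_union_annuli:
  assumes P: "finite P" "\<And>p q. p \<in> P \<Longrightarrow> q \<in> P \<Longrightarrow> p \<noteq> q \<Longrightarrow> \<delta> \<le> \<bar>r p - r q\<bar>"
    and r0: "\<And>p. p \<in> P \<Longrightarrow> r0 \<le> r p" "\<delta>/2 \<le> r0" and \<delta>: "\<delta> > 0"
  shows "ennreal (real (card P) * (2 * pi * r0 * \<delta>))
    \<le> emeasure lebesgue (\<Union>p\<in>P. radial_set {r p - \<delta>/2<..<r p + \<delta>/2})"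
proof -
  let ?A = "\<lambda>p. radial_set {r p - \<delta>/2<..<r p + \<delta>/2}"
  have meas: "?A ` P \<subseteq> sets lebesgue" using sets_lebesgue_radial_set by auto
  have disj: "disjoint_family_on ?A P"
    unfolding disjoint_family_on_def
  proof (intro ballI impI)
    fix p q assume "p \<in> P" "q \<in> P" "p \<noteq> q"
    then have "\<delta> \<le> \<bar>r p - r q\<bar>" using P(2) by auto
    then show "?A p \<inter> ?A q = {}" unfolding radial_set_def by auto
  qed
  have each: "ennreal (2 * pi * r0 * \<delta>) \<le> emeasure lebesgue (?A p)" if p: "p \<in> P" for p
  proof -
    have "emeasure lebesgue (?A p) = ennreal (pi * ((r p + \<delta>/2)^2 - (r p - \<delta>/2)^2))"
      by (rule emeasure_open_annulus) (use r0(1)[OF p] r0(2) \<delta> in auto)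
    also have "pi * ((r p + \<delta>/2)^2 - (r p - \<delta>/2)^2) = 2 * pi * r p * \<delta>"
      by (simp add: power2_eq_square algebra_simps)
    finally show ?thesis using r0(1)[OF p] \<delta> by (auto intro!: ennreal_leI)
  qed
  have "ennreal (real (card P) * (2 * pi * r0 * \<delta>)) = (\<Sum>p\<in>P. ennreal (2 * pi * r0 * \<delta>))"
    using \<delta> r0 by (simp add: ennreal_mult ennreal_of_nat_eq_real_of_nat)
  also have "\<dots> \<le> (\<Sum>p\<in>P. emeasure lebesgue (?A p))" by (intro sum_mono each)
  also have "\<dots> = emeasure lebesgue (\<Union>p\<in>P. ?A p)" by (rule sum_emeasure[OF meas disj P(1)])
  finally show ?thesis .
qed

lemma powr_scaling_bound:
  fixes X A B K a b u v :: real
  assumes "X > 0" "A > 0" "B > 0" "(A * X powr a) powr v \<le> K * (B * X powr b) powr u"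
  shows "X powr (a * v - b * u) \<le> K * B powr u / A powr v"
proof -
  from assms have "A powr v * X powr (a * v) \<le> K * B powr u * X powr (b * u)"
    by (simp add: powr_mult powr_powr mult_ac)
  with assms show ?thesis
    by (simp add: powr_diff field_simps)
qed

lemma radial_testing_large_disc:
  assumes K: "radial_testing E u v K" and E: "E \<subseteq> {1..2}" "t0 \<in> E" and R: "4 \<le> R"
  shows "(pi/4 * R^2) powr v \<le> K * (pi * R^2) powr u"
proof -
  have t0: "1 \<le> t0" "t0 \<le> 2" using E by auto
  have "ennreal (pi * (R/2)^2) \<le> ennreal (pi * (R-2)^2)"
    using R by (intro ennreal_leI mult_left_mono power_mono) auto
  also have "\<dots> = emeasure lebesgue (ball (0::real^2) (R-2))" using R by (simp add: emeasure_ball_vec2)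
  finally have T: "ennreal (pi/4 * R^2) \<le> emeasure lebesgue (ball (0::real^2) (R-2))"
    by (simp add: power_divide field_simps)
  have avg: "1 \<le> circ_avg (indicator (radial_set {..R})) x t0" if "x \<in> ball 0 (R-2)" for x
  proof (rule circ_avg_ge_1)
    fix s
    have "norm (x - t0 *\<^sub>R dir s) \<le> norm x + t0" using norm_triangle_ineq4[of x "t0 *\<^sub>R dir s"] t0 by simp
    with that t0 show "x - t0 *\<^sub>R dir s \<in> radial_set {..R}" unfolding radial_set_def by auto
  qed simp
  have M: "emeasure lebesgue (radial_set {..R}) \<le> ennreal (pi * R^2)"
    using R by (simp add: radial_set_atMost emeasure_cball_vec2)
  have "1 * (pi/4 * R^2) powr v \<le> K * (pi * R^2) powr u"
    by (rule radial_testingD[OF K _ M _ _ T]) (use R E(2) avg in auto)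
  then show ?thesis by simp
qed

lemma radial_testing_imp_v_le_u:
  assumes K: "radial_testing E u v K" and E: "E \<subseteq> {1..2}" "E \<noteq> {}"
  shows "v \<le> u"
proof -
  obtain t0 where t0: "t0 \<in> E" using E by auto
  have "v - u \<le> 0"
  proof (rule nonpos_exponent_of_bounded_at_top)
    fix X :: real assume X: "X \<ge> 16"
    have "4 \<le> sqrt X" using X real_le_rsqrt[of 4 X] by simp
    from radial_testing_large_disc[OF K E(1) t0 this] X
    have "(pi/4 * X powr 1) powr v \<le> K * (pi * X powr 1) powr u" by simp
    with X have "X powr (1 * v - 1 * u) \<le> K * pi powr u / (pi/4) powr v"
      by (intro powr_scaling_bound) auto
    then show "X powr (v - u) \<le> K * pi powr u / (pi/4) powr v" by simp
  qed
  then show ?thesis by simp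
qed

lemma radial_testing_thin_annulus:
  assumes K: "radial_testing E u v K" and E: "E \<subseteq> {1..2}" "t0 \<in> E" and \<delta>: "0 < \<delta>" "\<delta> \<le> 1/2"
  shows "(pi/4 * \<delta>^2) powr v \<le> K * (8 * pi * \<delta>) powr u"
proof -
  have t0: "1 \<le> t0" "t0 \<le> 2" using E by auto
  have "emeasure lebesgue (radial_set {t0 - \<delta>..t0 + \<delta>}) = ennreal (pi * ((t0 + \<delta>)^2 - (t0 - \<delta>)^2))"
    by (rule emeasure_closed_annulus) (use \<delta> t0 in auto)
  also have "pi * ((t0 + \<delta>)^2 - (t0 - \<delta>)^2) = 4 * pi * t0 * \<delta>"
    by (simp add: power2_eq_square algebra_simps)
  also have "\<dots> \<le> 8 * pi * \<delta>" using t0 \<delta> by simp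
  finally have M: "emeasure lebesgue (radial_set {t0 - \<delta>..t0 + \<delta>}) \<le> ennreal (8 * pi * \<delta>)"
    by (simp add: ennreal_leI)
  have T: "ennreal (pi/4 * \<delta>^2) \<le> emeasure lebesgue (ball (0::real^2) (\<delta>/2))"
    using \<delta> by (simp add: emeasure_ball_vec2 power_divide field_simps power2_eq_square)
  have avg: "1 \<le> circ_avg (indicator (radial_set {t0 - \<delta>..t0 + \<delta>})) x t0" if "x \<in> ball 0 (\<delta>/2)" for x
  proof (rule circ_avg_ge_1)
    fix s
    have "norm (x - t0 *\<^sub>R dir s) \<le> norm x + t0" using norm_triangle_ineq4[of x "t0 *\<^sub>R dir s"] t0 by simp
    moreover have "t0 - norm x \<le> norm (x - t0 *\<^sub>R dir s)"
      using norm_triangle_ineq2[of "t0 *\<^sub>R dir s" x] t0 by (simp add: norm_minus_commute)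
    ultimately show "x - t0 *\<^sub>R dir s \<in> radial_set {t0 - \<delta>..t0 + \<delta>}"
      using that \<delta> unfolding radial_set_def by auto
  qed simp
  have "1 * (pi/4 * \<delta>^2) powr v \<le> K * (8 * pi * \<delta>) powr u"
    by (rule radial_testingD[OF K _ M _ _ T]) (use \<delta> E(2) avg in auto)
  then show ?thesis by simp
qed

lemma radial_testing_imp_u_le_2v:
  assumes K: "radial_testing E u v K" and E: "E \<subseteq> {1..2}" "E \<noteq> {}"
  shows "u \<le> 2 * v"
proof -
  obtain t0 where t0: "t0 \<in> E" using E by auto
  have "0 \<le> 2 * v - u"
  proof (rule nonneg_exponent_of_bounded_near_0)
    fix \<epsilon> :: real assume "\<epsilon> > 0"
    define \<delta> where "\<delta> = min (\<epsilon>/2) (1/2)"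
    have \<delta>: "0 < \<delta>" "\<delta> < \<epsilon>" "\<delta> \<le> 1/2" unfolding \<delta>_def using \<open>\<epsilon> > 0\<close> by auto
    from radial_testing_thin_annulus[OF K E(1) t0 \<delta>(1,3)] \<delta>
    have "(pi/4 * \<delta> powr 2) powr v \<le> K * (8 * pi * \<delta> powr 1) powr u" by simp
    with \<delta> have "\<delta> powr (2 * v - 1 * u) \<le> K * (8 * pi) powr u / (pi/4) powr v"
      by (intro powr_scaling_bound) auto
    with \<delta> show "\<exists>\<delta>. 0 < \<delta> \<and> \<delta> < \<epsilon> \<and> \<delta> powr (2 * v - u) \<le> K * (8 * pi) powr u / (pi/4) powr v"
      by auto
  qed
  then show ?thesis by simp
qed

lemma radial_testing_disc_packing:
  assumes K: "radial_testing E u v K" and E: "E \<subseteq> {1..2}"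
  obtains K' where "\<And>\<delta> P. 0 < \<delta> \<Longrightarrow> \<delta> \<le> 1/2 \<Longrightarrow> finite P \<Longrightarrow> P \<noteq> {} \<Longrightarrow> P \<subseteq> E \<Longrightarrow> separated \<delta> P \<Longrightarrow>
      \<delta> * (real (card P) * \<delta>) powr v \<le> K' * (\<delta>^2) powr u"
proof -
  define K' where "K' = K * pi powr u * (8 * pi) / (2 * pi) powr v"
  show ?thesis
  proof (rule that)
    fix \<delta> P assume \<delta>: "0 < \<delta>" "\<delta> \<le> 1/2" and P: "finite P" "P \<noteq> {}" "P \<subseteq> E" "separated \<delta> P"
    have card_pos: "real (card P) > 0" using P by auto
    let ?T = "\<Union>p\<in>P. radial_set {p - \<delta>/2<..<p + \<delta>/2}"
    have T: "ennreal (real (card P) * (2 * pi * 1 * \<delta>)) \<le> emeasure lebesgue ?T"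
      by (rule emeasure_union_annuli[OF P(1), where r="\<lambda>p. p"]) (use P(3,4) E \<delta> in \<open>auto simp: separated_def\<close>)
    have T_meas: "?T \<in> sets lebesgue" using sets_lebesgue_radial_set P(1) by auto
    have M: "emeasure lebesgue (radial_set {..\<delta>}) \<le> ennreal (pi * \<delta>^2)"
      using \<delta> by (simp add: radial_set_atMost emeasure_cball_vec2)
    have sub: "?T \<subseteq> {x. \<exists>t\<in>E. \<delta> / (8*pi) \<le> circ_avg (indicator (radial_set {..\<delta>})) x t}"
    proof
      fix x assume "x \<in> ?T"
      then obtain p where p: "p \<in> P" "p - \<delta>/2 < norm x" "norm x < p + \<delta>/2" unfolding radial_set_def by auto
      have pE: "p \<in> E" "1 \<le> p" "p \<le> 2" using p P E by auto
      have "\<bar>norm x - p\<bar> < \<delta>/2" using p(2,3) unfolding abs_less_iff by linarith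
      thus "x \<in> {x. \<exists>t\<in>E. \<delta> / (8*pi) \<le> circ_avg (indicator (radial_set {..\<delta>})) x t}"
        using circ_avg_small_disc[OF pE(2,3) \<delta>] pE(1) by auto
    qed
    have main: "\<delta> / (8*pi) * (real (card P) * (2 * pi * 1 * \<delta>)) powr v \<le> K * (pi * \<delta>^2) powr u"
      by (rule radial_testingD[OF K _ M _ T_meas T _ _ sub[THEN subsetD, THEN CollectD]]) (use \<delta> pi_gt_zero card_pos in auto)
    have e1: "(real (card P) * (2 * pi * 1 * \<delta>)) powr v = (2*pi) powr v * (real (card P) * \<delta>) powr v"
      using pi_gt_zero \<delta> card_pos by (simp add: powr_mult[symmetric] mult_ac)
    have e2: "(pi * \<delta>^2) powr u = pi powr u * (\<delta>^2) powr u"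
      using pi_gt_zero \<delta> by (simp add: powr_mult)
    have "\<delta> * (real (card P) * \<delta>) powr v * ((2*pi) powr v / (8*pi))
        \<le> K * pi powr u * (\<delta>^2) powr u"
      using main unfolding e1 e2 by (simp add: field_simps)
    hence "\<delta> * (real (card P) * \<delta>) powr v \<le> K * pi powr u * (\<delta>^2) powr u * (8*pi) / (2*pi) powr v"
      using pi_gt_zero by (simp add: field_simps)
    thus "\<delta> * (real (card P) * \<delta>) powr v \<le> K' * (\<delta>^2) powr u"
      unfolding K'_def by (simp add: field_simps)
  qed
qed


lemma radial_testing_tangent_packing:
  assumes K: "radial_testing E u v K" and E: "E \<subseteq> {1..2}"
  obtains K' where "\<And>\<delta> R P a0. 1 \<le> a0 \<Longrightarrow> a0 \<le> 2 \<Longrightarrow> 0 < \<delta> \<Longrightarrow> \<delta> \<le> R/2 \<Longrightarrow> R \<le> 1 \<Longrightarrow>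
      finite P \<Longrightarrow> P \<noteq> {} \<Longrightarrow> P \<subseteq> E \<inter> {a0..a0+R} \<Longrightarrow> separated \<delta> P \<Longrightarrow>
      sqrt (\<delta>/R) * (real (card P) * R * \<delta>) powr v \<le> K' * \<delta> powr u"
proof -
  define K' where "K' = K * (16 * pi) powr u * (2 * pi * sqrt 12) / (2 * pi) powr v"
  show ?thesis
  proof (rule that)
    fix \<delta> R P a0 assume a0: "1 \<le> a0" "a0 \<le> 2" and \<delta>: "0 < \<delta>" "\<delta> \<le> R/2" and R: "R \<le> 1"
      and P: "finite P" "P \<noteq> {}" "P \<subseteq> E \<inter> {a0..a0+R}" "separated \<delta> P"
    have Rp: "R > 0" using \<delta> by auto
    have card_pos: "real (card P) > 0" using P by auto
    define \<rho> where "\<rho> = a0 + 2*R"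
    have \<rho>: "1 \<le> \<rho>" "\<rho> \<le> 4" using a0 Rp R unfolding \<rho>_def by auto
    let ?S = "{\<rho> - \<delta>..\<rho> + \<delta>}"
    let ?T = "\<Union>p\<in>P. radial_set {(\<rho> - p) - \<delta>/2<..<(\<rho> - p) + \<delta>/2}"
    have T: "ennreal (real (card P) * (2 * pi * R * \<delta>)) \<le> emeasure lebesgue ?T"
    proof (rule emeasure_union_annuli[OF P(1), where r="\<lambda>p. \<rho> - p"])
      show "\<And>p q. p \<in> P \<Longrightarrow> q \<in> P \<Longrightarrow> p \<noteq> q \<Longrightarrow> \<delta> \<le> \<bar>(\<rho> - p) - (\<rho> - q)\<bar>"
        using P(4) unfolding separated_def by (auto simp: abs_minus_commute)
      show "\<And>p. p \<in> P \<Longrightarrow> R \<le> \<rho> - p" using P(3) unfolding \<rho>_def by auto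
    qed (use \<delta> in auto)
    have T_meas: "?T \<in> sets lebesgue" using sets_lebesgue_radial_set P(1) by auto
    have "emeasure lebesgue (radial_set ?S) = ennreal (pi * ((\<rho> + \<delta>)^2 - (\<rho> - \<delta>)^2))"
      by (rule emeasure_closed_annulus) (use \<delta> R \<rho> in auto)
    also have "pi * ((\<rho> + \<delta>)^2 - (\<rho> - \<delta>)^2) = 4 * pi * \<rho> * \<delta>"
      by (simp add: power2_eq_square algebra_simps)
    also have "\<dots> \<le> 16 * pi * \<delta>" using \<rho> pi_gt_zero \<delta> by simp
    finally have M: "emeasure lebesgue (radial_set ?S) \<le> ennreal (16 * pi * \<delta>)" by (simp add: ennreal_leI)
    let ?a = "sqrt (\<delta> / (12*R)) / (2*pi)"
    have sub: "?T \<subseteq> {x. \<exists>t\<in>E. ?a \<le> circ_avg (indicator (radial_set ?S)) x t}"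
    proof
      fix x assume "x \<in> ?T"
      then obtain p where p: "p \<in> P" "\<rho> - p - \<delta>/2 < norm x" "norm x < \<rho> - p + \<delta>/2" unfolding radial_set_def by auto
      have pE: "p \<in> E" "1 \<le> p" "p \<le> 2" "a0 \<le> p" "p \<le> a0 + R" using p P E by auto
      have x1: "\<bar>norm x + p - \<rho>\<bar> < \<delta>/2" using p(2,3) unfolding abs_less_iff by linarith
      have x2: "norm x \<le> 3 * R" using p(3) pE \<delta> unfolding \<rho>_def by linarith
      have x3: "norm x > 0" using p(2) pE \<delta> unfolding \<rho>_def by linarith
      show "x \<in> {x. \<exists>t\<in>E. ?a \<le> circ_avg (indicator (radial_set ?S)) x t}"
        using circ_avg_tangent_annulus[OF pE(2,3) \<delta> R \<rho>(1) x1 x2 x3] pE(1) by auto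
    qed
    have main: "?a * (real (card P) * (2 * pi * R * \<delta>)) powr v \<le> K * (16 * pi * \<delta>) powr u"
      by (rule radial_testingD[OF K _ M _ T_meas T _ _ sub[THEN subsetD, THEN CollectD]]) (use \<delta> Rp pi_gt_zero card_pos in auto)
    have e0: "?a = sqrt (\<delta>/R) / (2 * pi * sqrt 12)"
      by (simp add: real_sqrt_divide real_sqrt_mult field_simps)
    have e1: "(real (card P) * (2 * pi * R * \<delta>)) powr v = (2*pi) powr v * (real (card P) * R * \<delta>) powr v"
      using pi_gt_zero \<delta> card_pos Rp by (simp add: powr_mult[symmetric] mult_ac)
    have e2: "(16 * pi * \<delta>) powr u = (16 * pi) powr u * \<delta> powr u"
      using pi_gt_zero \<delta> by (simp add: powr_mult)
    have "sqrt (\<delta>/R) * (real (card P) * R * \<delta>) powr v * ((2*pi) powr v / (2 * pi * sqrt 12))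
        \<le> K * (16 * pi) powr u * \<delta> powr u"
      using main unfolding e0 e1 e2 by (simp add: field_simps)
    hence "sqrt (\<delta>/R) * (real (card P) * R * \<delta>) powr v \<le> K * (16 * pi) powr u * \<delta> powr u * (2 * pi * sqrt 12) / (2*pi) powr v"
      using pi_gt_zero by (simp add: field_simps)
    thus "sqrt (\<delta>/R) * (real (card P) * R * \<delta>) powr v \<le> K' * \<delta> powr u"
      unfolding K'_def by (simp add: field_simps)
  qed
qed


lemma power2_powr: "0 < (x::real) \<Longrightarrow> (x^2) powr v = x powr (2 * v)"
  by (simp add: powr_powr flip: powr_numeral)

lemma disc_packing_exponent:
  fixes \<delta> N K u v s :: real
  assumes \<delta>: "0 < \<delta>" and v: "v \<ge> 0" and N: "N \<ge> \<delta> powr (-s) / 2"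
    and ineq: "\<delta> * (N * \<delta>) powr v \<le> K * (\<delta>^2) powr u"
  shows "\<delta> powr (1 + (1-s) * v - 2 * u) \<le> K * 2 powr v"
proof -
  define Y where "Y = \<delta> powr (1 - s) / 2"
  have Yp: "Y > 0" unfolding Y_def using \<delta> by simp
  have "Y = \<delta> powr (-s) / 2 * \<delta>" unfolding Y_def using \<delta> by (simp add: powr_diff powr_minus_divide)
  also have "\<dots> \<le> N * \<delta>" using N \<delta> by (intro mult_right_mono) auto
  finally have "Y powr v \<le> (N * \<delta>) powr v" using Yp v by (intro powr_mono2) auto
  hence "\<delta> * Y powr v \<le> K * (\<delta>^2) powr u" using ineq \<delta> by (smt (verit) mult_left_mono)
  moreover have "Y powr v = \<delta> powr ((1-s) * v) / 2 powr v"
    unfolding Y_def using \<delta> by (simp add: powr_divide powr_powr)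
  moreover have "(\<delta>^2) powr u = \<delta> powr (2 * u)"
  proof -
    have "\<delta>^2 = \<delta> powr 2" using \<delta> by simp
    thus ?thesis by (simp add: powr_powr)
  qed
  ultimately have "\<delta> * \<delta> powr ((1-s) * v) / 2 powr v \<le> K * \<delta> powr (2 * u)" using \<delta> by simp
  moreover have "\<delta> powr (1 + (1-s) * v) = \<delta> * \<delta> powr ((1-s) * v)" using \<delta> by (simp add: powr_add)
  ultimately have "\<delta> powr (1 + (1-s) * v) \<le> K * \<delta> powr (2 * u) * 2 powr v"
    by (simp add: divide_le_eq)
  hence "\<delta> powr (1 + (1-s) * v) / \<delta> powr (2 * u) \<le> K * 2 powr v"
    using \<delta> by (simp add: divide_le_eq mult_ac)
  thus ?thesis by (simp add: powr_diff[symmetric])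
qed

lemma tangent_packing_exponent:
  fixes \<delta> R N K u v s :: real
  assumes \<delta>: "0 < \<delta>" and R: "0 < R" and v: "v \<ge> 0" and N: "N \<ge> (\<delta>/R) powr (-s) / 2"
    and ineq: "sqrt (\<delta>/R) * (N * R * \<delta>) powr v \<le> K * \<delta> powr u"
  shows "(\<delta>/R) powr (1/2 + (1-s) * v - u) * R powr (2 * v - u) \<le> K * 2 powr v"
proof -
  define l where "l = \<delta>/R"
  have l: "l > 0" "\<delta> = l * R" unfolding l_def using \<delta> R by auto
  define Y where "Y = l powr (1 - s) * R powr 2 / 2"
  have Yp: "Y > 0" unfolding Y_def using l R by simp
  have "Y = l powr (-s) / 2 * R * \<delta>" unfolding Y_def using l R
    by (simp add: powr_diff powr_minus_divide power2_eq_square)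
  also have "\<dots> \<le> N * R * \<delta>" using N \<delta> R unfolding l_def by (intro mult_right_mono) auto
  finally have "Y powr v \<le> (N * R * \<delta>) powr v" using Yp v by (intro powr_mono2) auto
  hence "sqrt l * Y powr v \<le> K * \<delta> powr u" using ineq l unfolding l_def
    by (smt (verit) mult_left_mono real_sqrt_ge_zero)
  moreover have "Y powr v = l powr ((1-s) * v) * R powr (2 * v) / 2 powr v"
    unfolding Y_def using l R by (simp add: powr_divide powr_powr powr_mult power2_powr)
  moreover have "sqrt l = l powr (1/2)" using l by (simp add: powr_half_sqrt)
  moreover have "\<delta> powr u = l powr u * R powr u" using l R by (simp add: powr_mult)
  ultimately have "l powr (1/2) * (l powr ((1-s) * v) * R powr (2 * v) / 2 powr v) \<le> K * (l powr u * R powr u)"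
    by simp
  hence "l powr (1/2 + (1-s) * v) * R powr (2 * v) \<le> K * (l powr u * R powr u) * 2 powr v"
    by (simp add: powr_add divide_le_eq mult_ac)
  hence "(l powr (1/2 + (1-s) * v) / l powr u) * (R powr (2 * v) / R powr u) \<le> K * 2 powr v"
    using l R by (simp add: divide_le_eq field_simps)
  thus ?thesis unfolding l_def[symmetric] by (simp add: powr_diff[symmetric])
qed

lemma separated_subset_of_large_cover_num:
  assumes E: "E \<subseteq> {1..2}" and ab: "a < b" and \<delta>: "0 < \<delta>" "\<delta> < b - a" and s: "s > 0" and c: "c \<ge> 6"
    and N: "real (cover_num (E \<inter> {a..b}) \<delta>) > c * (\<delta>/(b-a)) powr (-s)"
  obtains a0 R P where "1 \<le> a0" "a0 \<le> 2" "0 < R" "R \<le> 1" "R = min (b-a) 1" "\<delta> \<le> R/2"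
    "finite P" "P \<noteq> {}" "P \<subseteq> E \<inter> {a0..a0+R}" "separated \<delta> P"
    "real (card P) \<ge> (\<delta>/R) powr (-s) / 2" "\<delta>/R < 2/(c-2)"
proof -
  define a0 where "a0 = max a 1"
  define R where "R = min (b-a) 1"
  have R: "0 < R" "R \<le> 1" "R \<le> b - a" using ab unfolding R_def by auto
  have F: "E \<inter> {a..b} \<subseteq> {a0..a0+R}"
  proof
    fix y assume y: "y \<in> E \<inter> {a..b}"
    hence "1 \<le> y" "y \<le> 2" "a \<le> y" "y \<le> b" using E by auto
    thus "y \<in> {a0..a0+R}" unfolding a0_def R_def by auto
  qed
  have lam: "\<delta> / (b-a) \<le> \<delta> / R" using R \<delta> by (intro divide_left_mono) auto
  have "(\<delta>/R) powr (-s) \<le> (\<delta>/(b-a)) powr (-s)"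
    using lam \<delta> ab s by (intro powr_mono2') auto
  moreover have "1 \<le> (\<delta>/(b-a)) powr (-s)"
  proof -
    have "(\<delta>/(b-a)) powr s \<le> 1" using \<delta> ab s by (intro powr_le1) auto
    thus ?thesis using \<delta> ab by (simp add: powr_minus_divide)
  qed
  ultimately have X: "(\<delta>/R) powr (-s) \<le> (\<delta>/(b-a)) powr (-s)" "1 \<le> (\<delta>/(b-a)) powr (-s)" by auto
  obtain P where P: "finite P" "P \<subseteq> E \<inter> {a..b}" "separated \<delta> P" "real (card P) > c * (\<delta>/(b-a)) powr (-s) / 2"
    using separated_subset_of_cover_num_gt[OF F \<delta>(1) _ N] R by auto
  have cardP: "real (card P) \<ge> (\<delta>/R) powr (-s) / 2"
  proof -
    have "(\<delta>/(b-a)) powr (-s) \<le> c * (\<delta>/(b-a)) powr (-s)"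
      using X c by (intro mult_le_cancel_right1[THEN iffD2]) auto
    hence "(\<delta>/R) powr (-s) \<le> c * (\<delta>/(b-a)) powr (-s)" using X(1) by linarith
    thus ?thesis using P(4) by linarith
  qed
  have "c \<le> c * (\<delta>/(b-a)) powr (-s)" using X c by (simp add: mult_le_cancel_left1)
  also have "\<dots> < real (cover_num (E \<inter> {a..b}) \<delta>)" by (rule N)
  also have "\<dots> \<le> 2 * (R + \<delta>) / \<delta>" by (rule cover_num_le_length[OF F \<delta>(1)]) (use R in auto)
  finally have "c * \<delta> < 2 * (R + \<delta>)" using \<delta> by (simp add: field_simps)
  hence cd: "(c - 2) * \<delta> < 2 * R" by (simp add: algebra_simps)
  have l2: "\<delta>/R < 2/(c-2)" using cd c R \<delta> by (simp add: field_simps)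
  have "4 * \<delta> \<le> (c - 2) * \<delta>" using c \<delta> by (intro mult_right_mono) auto
  hence dR: "\<delta> \<le> R/2" using cd by linarith
  have Pne: "P \<noteq> {}"
  proof
    assume "P = {}"
    hence "c * (\<delta>/(b-a)) powr (-s) / 2 < 0" using P(4) by simp
    moreover have "0 \<le> c * (\<delta>/(b-a)) powr (-s)" using X c by simp
    ultimately show False by linarith
  qed
  then obtain p where p: "p \<in> P" by auto
  have "p \<in> E" "a \<le> p" using p P(2) by auto
  hence "a \<le> 2" using E by force
  hence a02: "a0 \<le> 2" unfolding a0_def by simp
  have PP: "P \<subseteq> E \<inter> {a0..a0+R}" using P(2) F by auto
  have a01: "1 \<le> a0" unfolding a0_def by simp
  show ?thesis by (rule that[OF a01 a02 R(1,2) R_def dR P(1) Pne PP P(3) cardP l2])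
qed

lemma separated_packings_below_minkowski_dim:
  assumes E: "E \<subseteq> {1..2}" and s: "0 < s" "s < minkowski_dim E" and \<epsilon>: "\<epsilon> > 0"
  shows "\<exists>\<delta> P. 0 < \<delta> \<and> \<delta> < \<epsilon> \<and> \<delta> \<le> 1/2 \<and> finite P \<and> P \<noteq> {} \<and> P \<subseteq> E \<and> separated \<delta> P
    \<and> real (card P) \<ge> \<delta> powr (-s) / 2"
proof -
  have s1: "s < 1" using s minkowski_dim_bounds[OF E] by linarith
  define \<eta> where "\<eta> = min \<epsilon> (1/2)"
  have \<eta>: "0 < \<eta>" "\<eta> \<le> \<epsilon>" "\<eta> \<le> 1/2" unfolding \<eta>_def using \<epsilon> by auto
  define c where "c = max 1 (4 / \<eta> powr (1-s))"
  have c: "c \<ge> 1" "c \<ge> 4 / \<eta> powr (1-s)" unfolding c_def by auto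
  obtain \<delta> where \<delta>: "0 < \<delta>" "\<delta> < 1" "real (cover_num E \<delta>) > c * \<delta> powr (-s)"
    using cover_num_large_below_minkowski_dim[OF s, of c] by blast
  have E2: "E \<subseteq> {1..1+1}" using E by auto
  have "real (cover_num E \<delta>) \<le> 2 * (1 + \<delta>) / \<delta>" by (rule cover_num_le_length[OF E2 \<delta>(1)]) simp
  also have "\<dots> \<le> 4 / \<delta>" using \<delta> by (simp add: divide_right_mono)
  finally have "c * \<delta> powr (-s) < 4 / \<delta>" using \<delta>(3) by linarith
  hence "c * \<delta> powr (-s) * (\<delta> powr s * \<delta>) < 4 / \<delta> * (\<delta> powr s * \<delta>)" using \<delta> by (intro mult_strict_right_mono) auto
  hence "c * \<delta> < 4 * \<delta> powr s" using \<delta> by (simp add: powr_minus field_simps)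
  moreover have "\<delta> = \<delta> powr s * \<delta> powr (1-s)" using \<delta> by (simp add: powr_add[symmetric])
  ultimately have "c * (\<delta> powr s * \<delta> powr (1-s)) < 4 * \<delta> powr s" by metis
  hence cd: "c * \<delta> powr (1-s) < 4" using \<delta> by (simp add: field_simps)
  have dlt: "\<delta> < \<eta>"
  proof (rule ccontr)
    assume "\<not> \<delta> < \<eta>"
    hence "\<eta> powr (1-s) \<le> \<delta> powr (1-s)" using \<eta> s1 by (intro powr_mono2) auto
    hence "4 / \<eta> powr (1-s) * \<eta> powr (1-s) \<le> c * \<delta> powr (1-s)"
      using c \<eta> by (intro mult_mono) auto
    thus False using cd \<eta> by simp
  qed
  obtain P where P: "finite P" "P \<subseteq> E" "separated \<delta> P" "real (card P) > c * \<delta> powr (-s) / 2"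
    using separated_subset_of_cover_num_gt[OF E2 \<delta>(1) _ \<delta>(3)] by auto
  have card_pos: "real (card P) \<ge> \<delta> powr (-s) / 2"
  proof -
    have "1 * \<delta> powr (-s) \<le> c * \<delta> powr (-s)" using c by (intro mult_right_mono) auto
    thus ?thesis using P(4) by linarith
  qed
  have "P \<noteq> {}" using card_pos P(4) c by (smt (verit) card.empty of_nat_0 powr_gt_zero \<delta>(1) divide_pos_pos mult_pos_pos)
  then show "\<exists>\<delta> P. 0 < \<delta> \<and> \<delta> < \<epsilon> \<and> \<delta> \<le> 1/2 \<and> finite P \<and> P \<noteq> {} \<and> P \<subseteq> E \<and> separated \<delta> P
      \<and> real (card P) \<ge> \<delta> powr (-s) / 2" using \<delta> dlt \<eta> P card_pos by (intro exI[of _ \<delta>] exI[of _ P]) auto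
qed

lemma radial_testing_packing_exponent:
  assumes K: "radial_testing E u v K" and E: "E \<subseteq> {1..2}" and v: "v \<ge> 0"
    and packings: "\<And>\<epsilon>. \<epsilon> > 0 \<Longrightarrow> \<exists>\<delta> P. 0 < \<delta> \<and> \<delta> < \<epsilon> \<and> \<delta> \<le> 1/2 \<and> finite P \<and> P \<noteq> {}
      \<and> P \<subseteq> E \<and> separated \<delta> P \<and> real (card P) \<ge> \<delta> powr (-s) / 2"
  shows "0 \<le> 1 + (1-s) * v - 2 * u"
proof -
  obtain K' where K': "\<And>\<delta> P. 0 < \<delta> \<Longrightarrow> \<delta> \<le> 1/2 \<Longrightarrow> finite P \<Longrightarrow> P \<noteq> {} \<Longrightarrow> P \<subseteq> E \<Longrightarrow>
      separated \<delta> P \<Longrightarrow> \<delta> * (real (card P) * \<delta>) powr v \<le> K' * (\<delta>^2) powr u"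
    using radial_testing_disc_packing[OF K E] by blast
  show ?thesis
  proof (rule nonneg_exponent_of_bounded_near_0[where K="K' * 2 powr v"])
    fix \<epsilon> :: real assume "\<epsilon> > 0"
    then obtain \<delta> P where dP: "0 < \<delta>" "\<delta> < \<epsilon>" "\<delta> \<le> 1/2" "finite P" "P \<noteq> {}" "P \<subseteq> E" "separated \<delta> P"
      "real (card P) \<ge> \<delta> powr (-s) / 2" using packings by blast
    then have "\<delta> * (real (card P) * \<delta>) powr v \<le> K' * (\<delta>^2) powr u" by (intro K')
    then have "\<delta> powr (1 + (1-s) * v - 2 * u) \<le> K' * 2 powr v" by (rule disc_packing_exponent[OF dP(1) v dP(8)])
    with dP show "\<exists>\<delta>. 0 < \<delta> \<and> \<delta> < \<epsilon> \<and> \<delta> powr (1 + (1-s) * v - 2 * u) \<le> K' * 2 powr v" by blast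
  qed
qed

lemma radial_testing_minkowski_bound:
  assumes K: "radial_testing E u v K" and E: "E \<subseteq> {1..2}" "E \<noteq> {}" and v: "v \<ge> 0"
  shows "0 \<le> 1 + (1 - minkowski_dim E) * v - 2 * u"
proof (cases "minkowski_dim E > 0")
  case True
  show ?thesis
  proof (rule nonneg_on_closed_interval[where f="\<lambda>s. 1 + (1-s) * v - 2 * u"])
    show "continuous_on {0..minkowski_dim E} (\<lambda>s. 1 + (1-s) * v - 2 * u)"
      by (intro continuous_intros)
    fix s assume "0 < s" "s < minkowski_dim E"
    then show "0 \<le> 1 + (1-s) * v - 2 * u"
      by (intro radial_testing_packing_exponent[OF K E(1) v] separated_packings_below_minkowski_dim[OF E(1)])
  qed (use True in auto)
next
  case False
  with minkowski_dim_bounds[OF E(1)] have "minkowski_dim E = 0" by simp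
  obtain t0 where t0: "t0 \<in> E" using E by auto
  have "0 \<le> 1 + (1-0) * v - 2 * u"
  proof (rule radial_testing_packing_exponent[OF K E(1) v])
    fix \<epsilon> :: real assume \<epsilon>: "\<epsilon> > 0"
    define \<delta> where "\<delta> = min (\<epsilon>/2) (1/2)"
    have "0 < \<delta>" "\<delta> < \<epsilon>" "\<delta> \<le> 1/2" unfolding \<delta>_def using \<epsilon> by auto
    moreover have "separated \<delta> {t0}" unfolding separated_def by auto
    ultimately show "\<exists>\<delta> P. 0 < \<delta> \<and> \<delta> < \<epsilon> \<and> \<delta> \<le> 1/2 \<and> finite P \<and> P \<noteq> {} \<and> P \<subseteq> E
      \<and> separated \<delta> P \<and> real (card P) \<ge> \<delta> powr (-0) / 2" using t0 by (intro exI[of _ \<delta>] exI[of _ "{t0}"]) auto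
  qed
  with \<open>minkowski_dim E = 0\<close> show ?thesis by simp
qed

lemma radial_testing_tangential:
  assumes K: "radial_testing E u v K" and E: "E \<subseteq> {1..2}" and v: "v \<ge> 0"
  obtains K' where "\<And>a b \<delta> s \<epsilon>. a < b \<Longrightarrow> 0 < \<delta> \<Longrightarrow> \<delta> < b - a \<Longrightarrow> 0 < s \<Longrightarrow> 0 < \<epsilon> \<Longrightarrow>
      real (cover_num (E \<inter> {a..b}) \<delta>) > (6 + 2/\<epsilon>) * (\<delta>/(b-a)) powr (-s) \<Longrightarrow>
      \<delta> / min (b-a) 1 < \<epsilon> \<and>
      (\<delta> / min (b-a) 1) powr (1/2 + (1-s) * v - u) * (min (b-a) 1) powr (2 * v - u) \<le> K'"
proof -
  obtain K' where K': "\<And>\<delta> R P a0. 1 \<le> a0 \<Longrightarrow> a0 \<le> 2 \<Longrightarrow> 0 < \<delta> \<Longrightarrow> \<delta> \<le> R/2 \<Longrightarrow> R \<le> 1 \<Longrightarrow>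
      finite P \<Longrightarrow> P \<noteq> {} \<Longrightarrow> P \<subseteq> E \<inter> {a0..a0+R} \<Longrightarrow> separated \<delta> P \<Longrightarrow>
      sqrt (\<delta>/R) * (real (card P) * R * \<delta>) powr v \<le> K' * \<delta> powr u"
    using radial_testing_tangent_packing[OF K E] by blast
  show ?thesis
  proof (rule that[of "K' * 2 powr v"])
    fix a b \<delta> s \<epsilon> :: real
    assume ab: "a < b" "0 < \<delta>" "\<delta> < b - a" and s: "0 < s" and \<epsilon>: "0 < \<epsilon>"
      and N: "real (cover_num (E \<inter> {a..b}) \<delta>) > (6 + 2/\<epsilon>) * (\<delta>/(b-a)) powr (-s)"
    obtain a0 R P where config: "1 \<le> a0" "a0 \<le> 2" "0 < R" "R \<le> 1" "R = min (b-a) 1" "\<delta> \<le> R/2"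
      "finite P" "P \<noteq> {}" "P \<subseteq> E \<inter> {a0..a0+R}" "separated \<delta> P"
      "real (card P) \<ge> (\<delta>/R) powr (-s) / 2" "\<delta>/R < 2/((6 + 2/\<epsilon>) - 2)"
      by (rule separated_subset_of_large_cover_num[OF E ab s _ N]) (use \<epsilon> in auto)
    have "2/((6 + 2/\<epsilon>) - 2) \<le> \<epsilon>" using \<epsilon> by (simp add: field_simps)
    with config have "\<delta> / min (b-a) 1 < \<epsilon>" by simp
    moreover have "sqrt (\<delta>/R) * (real (card P) * R * \<delta>) powr v \<le> K' * \<delta> powr u"
      by (rule K'[OF config(1,2) ab(2) config(6,4,7-10)])
    then have "(\<delta>/R) powr (1/2 + (1-s) * v - u) * R powr (2 * v - u) \<le> K' * 2 powr v"
      by (rule tangent_packing_exponent[OF ab(2) config(3) v config(11)])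
    ultimately show "\<delta> / min (b-a) 1 < \<epsilon> \<and>
      (\<delta> / min (b-a) 1) powr (1/2 + (1-s) * v - u) * (min (b-a) 1) powr (2 * v - u) \<le> K' * 2 powr v"
      using config(5) by simp
  qed
qed

lemma radial_testing_assouad_bound:
  assumes K: "radial_testing E u v K" and E: "E \<subseteq> {1..2}" and v: "v \<ge> 0" and uv: "u = 2 * v"
    and s: "0 < s" "s < assouad_dim E"
  shows "0 \<le> 1/2 + (1-s) * v - u"
proof -
  obtain K' where K': "\<And>a b \<delta> s \<epsilon>. a < b \<Longrightarrow> 0 < \<delta> \<Longrightarrow> \<delta> < b - a \<Longrightarrow> 0 < s \<Longrightarrow> 0 < \<epsilon> \<Longrightarrow>
      real (cover_num (E \<inter> {a..b}) \<delta>) > (6 + 2/\<epsilon>) * (\<delta>/(b-a)) powr (-s) \<Longrightarrow>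
      \<delta> / min (b-a) 1 < \<epsilon> \<and>
      (\<delta> / min (b-a) 1) powr (1/2 + (1-s) * v - u) * (min (b-a) 1) powr (2 * v - u) \<le> K'"
    using radial_testing_tangential[OF K E v] by blast
  show ?thesis
  proof (rule nonneg_exponent_of_bounded_near_0[where K=K'])
    fix \<epsilon> :: real assume \<epsilon>: "\<epsilon> > 0"
    obtain a b \<delta> where scale: "a < b" "0 < \<delta>" "\<delta> < b - a"
      "real (cover_num (E \<inter> {a..b}) \<delta>) > (6 + 2/\<epsilon>) * (\<delta> / (b - a)) powr (-s)"
      using cover_num_large_below_assouad_dim[OF s] by blast
    have "min (b-a) 1 > 0" using scale(1) by simp
    with K'[OF scale(1-3) s(1) \<epsilon> scale(4)] uv scale(2)
    show "\<exists>l. 0 < l \<and> l < \<epsilon> \<and> l powr (1/2 + (1-s) * v - u) \<le> K'"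
      by (intro exI[of _ "\<delta> / min (b-a) 1"]) auto
  qed
qed

lemma powr_le_of_scaled_powr_le:
  fixes l R \<theta> e :: real
  assumes "0 < l" "0 < R" "0 < \<theta>" "\<theta> < 1" "0 \<le> e" "(l * R) powr \<theta> \<le> R"
  shows "l powr (\<theta> * e / (1 - \<theta>)) \<le> R powr e"
proof -
  have "l powr \<theta> * R powr \<theta> \<le> R" using assms by (simp add: powr_mult)
  then have "l powr \<theta> \<le> R / R powr \<theta>" using assms(2) by (simp add: field_simps)
  also have "\<dots> = R powr (1 - \<theta>)" using assms(2) by (simp add: powr_diff)
  finally have "(l powr \<theta>) powr (1/(1-\<theta>)) \<le> (R powr (1 - \<theta>)) powr (1/(1-\<theta>))"
    using assms by (intro powr_mono2) auto
  then have "l powr (\<theta>/(1-\<theta>)) \<le> R" using assms by (simp add: powr_powr)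
  then have "(l powr (\<theta>/(1-\<theta>))) powr e \<le> R powr e" using assms by (intro powr_mono2) auto
  then show ?thesis by (simp add: powr_powr)
qed

lemma radial_testing_assouad_spec_bound:
  assumes K: "radial_testing E u v K" and E: "E \<subseteq> {1..2}" and v: "v \<ge> 0" and uv: "u \<le> 2 * v"
    and \<theta>: "0 < \<theta>" "\<theta> < 1" and s: "0 < s" "s < assouad_spec E \<theta>"
  shows "0 \<le> (1-\<theta>) * (1/2 + (1-s) * v - u) + \<theta> * (2 * v - u)"
proof -
  obtain K' where K': "\<And>a b \<delta> s \<epsilon>. a < b \<Longrightarrow> 0 < \<delta> \<Longrightarrow> \<delta> < b - a \<Longrightarrow> 0 < s \<Longrightarrow> 0 < \<epsilon> \<Longrightarrow>
      real (cover_num (E \<inter> {a..b}) \<delta>) > (6 + 2/\<epsilon>) * (\<delta>/(b-a)) powr (-s) \<Longrightarrow>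
      \<delta> / min (b-a) 1 < \<epsilon> \<and>
      (\<delta> / min (b-a) 1) powr (1/2 + (1-s) * v - u) * (min (b-a) 1) powr (2 * v - u) \<le> K'"
    using radial_testing_tangential[OF K E v] by blast
  define e where "e = (1/2 + (1-s) * v - u) + \<theta> * (2 * v - u) / (1 - \<theta>)"
  have "0 \<le> e"
  proof (rule nonneg_exponent_of_bounded_near_0[where K=K'])
    fix \<epsilon> :: real assume \<epsilon>: "\<epsilon> > 0"
    obtain \<delta> a b where scale: "0 < \<delta>" "\<delta> < 1" "a < b" "b - a \<ge> \<delta> powr \<theta>"
      "real (cover_num (E \<inter> {a..b}) \<delta>) > (6 + 2/\<epsilon>) * (\<delta> / (b - a)) powr (-s)"
      using cover_num_large_below_assouad_spec[OF s] by blast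
    have "\<delta> powr 1 < \<delta> powr \<theta>" using scale \<theta> by (intro powr_less_mono') auto
    then have dba: "\<delta> < b - a" using scale by simp
    define R where "R = min (b-a) 1"
    define l where "l = \<delta>/R"
    have R: "0 < R" "R \<le> 1" unfolding R_def using scale by auto
    have l: "0 < l" "\<delta> = l * R" unfolding l_def using R scale by auto
    from K'[OF scale(3,1) dba s(1) \<epsilon> scale(5)]
    have l_eps: "l < \<epsilon>" and main: "l powr (1/2 + (1-s) * v - u) * R powr (2 * v - u) \<le> K'"
      unfolding l_def R_def by auto
    have "\<delta> powr \<theta> \<le> 1" using scale \<theta> by (intro powr_le1) auto
    then have "\<delta> powr \<theta> \<le> R" using scale unfolding R_def by auto
    then have "l powr (\<theta> * (2 * v - u)/(1-\<theta>)) \<le> R powr (2 * v - u)"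
      using l R \<theta> uv by (intro powr_le_of_scaled_powr_le) auto
    then have "l powr (1/2 + (1-s) * v - u) * l powr (\<theta> * (2 * v - u)/(1-\<theta>))
        \<le> l powr (1/2 + (1-s) * v - u) * R powr (2 * v - u)" by (intro mult_left_mono) auto
    also have "\<dots> \<le> K'" by (rule main)
    finally have "l powr e \<le> K'" unfolding e_def by (simp add: powr_add)
    with l l_eps show "\<exists>l. 0 < l \<and> l < \<epsilon> \<and> l powr e \<le> K'" by blast
  qed
  then have "0 \<le> (1 - \<theta>) * e" using \<theta> by simp
  also have "(1 - \<theta>) * e = (1-\<theta>) * (1/2 + (1-s) * v - u) + \<theta> * (2 * v - u)"
    unfolding e_def using \<theta> by (simp add: field_simps)
  finally show ?thesis .
qed

section \<open>The quadrilateral\<close>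

text \<open>Q3 is the intersection of the Minkowski line 2u - (1 - \<beta>)v = 1 through Q1 with the
  line u - (2 - \<beta> - \<beta>/\<gamma>)v = \<beta>/(2\<gamma>) through Q2 (2\<gamma> - 1) coming from the Assouad
  spectrum at \<theta> = 1 - \<beta>/\<gamma>.\<close>

lemma Q3_on_lines:
  fixes \<beta> \<gamma> :: real
  assumes \<beta>: "0 \<le> \<beta>" "\<beta> \<le> 1" and bg: "1 + \<beta> \<le> 2 * \<gamma>" and b1: "\<beta> = 1 \<Longrightarrow> \<gamma> = 1"
  obtains x3 y3 where "Q3 \<beta> \<gamma> = (x3, y3)" "0 < y3" "y3 < x3"
    "2 * x3 - (1 - \<beta>) * y3 = 1" "\<beta> = 0 \<longrightarrow> x3 = 2 * y3"
    "0 < \<beta> \<longrightarrow> x3 - (2 - \<beta> - \<beta>/\<gamma>) * y3 = \<beta> / (2 * \<gamma>)"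
proof -
  have gp: "\<gamma> > 0" using bg \<beta> by linarith
  define \<theta> where "\<theta> = theta_Q \<beta> \<gamma>"
  have \<theta>: "0 < \<theta>" "\<theta> \<le> 1" "1 - \<beta> = 2 * \<theta> * (\<gamma> - \<beta>)"
  proof (atomize (full), cases "\<beta> < 1")
    case True
    then have gb: "\<gamma> - \<beta> > 0" using bg by linarith
    have thd: "\<theta> = (1 - \<beta>) / (2 * (\<gamma> - \<beta>))" unfolding \<theta>_def theta_Q_def using True by simp
    have "0 < \<theta>" unfolding thd using True gb by simp
    moreover have "\<theta> \<le> 1" unfolding thd using gb bg by (simp add: field_simps)
    moreover have "1 - \<beta> = 2 * \<theta> * (\<gamma> - \<beta>)" unfolding thd using gb by (simp add: field_simps)
    ultimately show "0 < \<theta> \<and> \<theta> \<le> 1 \<and> 1 - \<beta> = 2 * \<theta> * (\<gamma> - \<beta>)" by blast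
  next
    case False
    with \<beta> b1 show "0 < \<theta> \<and> \<theta> \<le> 1 \<and> 1 - \<beta> = 2 * \<theta> * (\<gamma> - \<beta>)"
      unfolding \<theta>_def theta_Q_def by simp
  qed
  define D where "D = 2 * (1 + \<gamma> * \<theta>)"
  have D: "D > 0" unfolding D_def using gp \<theta> by (simp add: add_pos_nonneg)
  define x3 where "x3 = (2 - \<beta> * (1 - \<theta>)) / D"
  define y3 where "y3 = 1 / D"
  have "\<beta> * (1 - \<theta>) < 1"
  proof (cases "\<beta> = 1")
    case False
    with \<beta> \<theta> have "\<beta> * (1 - \<theta>) \<le> \<beta> * 1" by (intro mult_left_mono) auto
    with False \<beta> show ?thesis by simp
  qed (use \<theta> in simp)
  show ?thesis
  proof (rule that[of x3 y3])
    show "Q3 \<beta> \<gamma> = (x3, y3)" unfolding Q3_def x3_def y3_def D_def \<theta>_def Let_def by simp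
    show "0 < y3" unfolding y3_def using D by simp
    show "y3 < x3" unfolding x3_def y3_def using D \<open>\<beta> * (1 - \<theta>) < 1\<close> by (simp add: divide_strict_right_mono)
    have "2 * x3 - (1 - \<beta>) * y3 = (4 - 2 * \<beta> * (1 - \<theta>) - (1 - \<beta>)) / D"
      unfolding x3_def y3_def using D by (simp add: field_simps)
    also have "4 - 2 * \<beta> * (1 - \<theta>) - (1 - \<beta>) = D" unfolding D_def using \<theta>(3) by (simp add: algebra_simps)
    finally show "2 * x3 - (1 - \<beta>) * y3 = 1" using D by simp
    show "\<beta> = 0 \<longrightarrow> x3 = 2 * y3" unfolding x3_def y3_def by simp
    have "x3 - (2 - \<beta> - \<beta>/\<gamma>) * y3 = (\<beta> * \<theta> + \<beta> / \<gamma>) / D" unfolding x3_def y3_def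
      using D gp by (simp add: field_simps)
    also have "\<beta> * \<theta> + \<beta> / \<gamma> = \<beta> / (2 * \<gamma>) * D" unfolding D_def using gp by (simp add: field_simps)
    finally show "0 < \<beta> \<longrightarrow> x3 - (2 - \<beta> - \<beta>/\<gamma>) * y3 = \<beta> / (2 * \<gamma>)" using D by simp
  qed
qed

lemma convex_hull_triangle_memI:
  fixes p1 p2 q1 q2 u v m n c :: real
  assumes det: "p1 * q2 - p2 * q1 \<noteq> 0"
    and line: "m * p1 + n * p2 = c" "m * q1 + n * q2 = c" "c > 0"
    and coeffs: "0 \<le> (u * q2 - v * q1) / (p1 * q2 - p2 * q1)" "0 \<le> (p1 * v - p2 * u) / (p1 * q2 - p2 * q1)"
    and below: "m * u + n * v \<le> c"
  shows "(u, v) \<in> convex hull {(0, 0), (p1, p2), (q1, q2)}"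
proof -
  define \<alpha> where "\<alpha> = (u * q2 - v * q1) / (p1 * q2 - p2 * q1)"
  define \<mu> where "\<mu> = (p1 * v - p2 * u) / (p1 * q2 - p2 * q1)"
  have "\<alpha> * p1 + \<mu> * q1 = ((u * q2 - v * q1) * p1 + (p1 * v - p2 * u) * q1) / (p1 * q2 - p2 * q1)"
    unfolding \<alpha>_def \<mu>_def by (simp add: add_divide_distrib)
  also have "(u * q2 - v * q1) * p1 + (p1 * v - p2 * u) * q1 = u * (p1 * q2 - p2 * q1)"
    by (simp add: algebra_simps)
  finally have u: "\<alpha> * p1 + \<mu> * q1 = u" using det by simp
  have "\<alpha> * p2 + \<mu> * q2 = ((u * q2 - v * q1) * p2 + (p1 * v - p2 * u) * q2) / (p1 * q2 - p2 * q1)"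
    unfolding \<alpha>_def \<mu>_def by (simp add: add_divide_distrib)
  also have "(u * q2 - v * q1) * p2 + (p1 * v - p2 * u) * q2 = v * (p1 * q2 - p2 * q1)"
    by (simp add: algebra_simps)
  finally have v: "\<alpha> * p2 + \<mu> * q2 = v" using det by simp
  have "c * (\<alpha> + \<mu>) = \<alpha> * (m * p1 + n * p2) + \<mu> * (m * q1 + n * q2)"
    using line by (simp add: algebra_simps)
  also have "\<dots> = m * u + n * v" unfolding u[symmetric] v[symmetric] by (simp add: algebra_simps)
  finally have "c * (\<alpha> + \<mu>) \<le> c * 1" using below by simp
  then have "\<alpha> + \<mu> \<le> 1" using line(3) by (rule mult_left_le_imp_le)
  moreover have "(u, v) = (1 - \<alpha> - \<mu>) *\<^sub>R (0, 0) + \<alpha> *\<^sub>R (p1, p2) + \<mu> *\<^sub>R (q1, q2)"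
    using u v by simp
  ultimately show ?thesis
    unfolding convex_hull_3 using coeffs unfolding \<alpha>_def[symmetric] \<mu>_def[symmetric]
    by (intro CollectI exI[of _ "1 - \<alpha> - \<mu>"] exI[of _ \<alpha>] exI[of _ \<mu>]) auto
qed

lemma quadQ_memI:
  fixes \<beta> \<gamma> u v :: real
  assumes \<beta>: "0 \<le> \<beta>" "\<beta> \<le> 1" and bg: "1 + \<beta> \<le> 2 * \<gamma>" and b1: "\<beta> = 1 \<Longrightarrow> \<gamma> = 1"
    and uv: "0 \<le> v" "v \<le> u" "u \<le> 2 * v" "2 * u - (1 - \<beta>) * v \<le> 1"
    and spec: "0 < \<beta> \<Longrightarrow> 0 \<le> (\<beta>/\<gamma>) * (1/2 + (1 - \<gamma>) * v - u) + (1 - \<beta>/\<gamma>) * (2 * v - u)"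
  shows "(u, v) \<in> quadQ \<beta> \<gamma>"
proof -
  have gp: "\<gamma> > 0" using bg \<beta> by linarith
  obtain x3 y3 where Q3: "Q3 \<beta> \<gamma> = (x3, y3)" "0 < y3" "y3 < x3"
    "2 * x3 - (1 - \<beta>) * y3 = 1" "\<beta> = 0 \<longrightarrow> x3 = 2 * y3"
    "0 < \<beta> \<longrightarrow> x3 - (2 - \<beta> - \<beta>/\<gamma>) * y3 = \<beta> / (2 * \<gamma>)"
    by (rule Q3_on_lines[OF \<beta> bg b1])
  define q where "q = 1 / (1 + \<beta>)"
  have "2 * q + - (1 - \<beta>) * q = (1 + \<beta>) * q" by (simp add: algebra_simps)
  also have "\<dots> = 1" unfolding q_def using \<beta> by simp
  finally have q: "Q1 \<beta> = (q, q)" "q > 0" "2 * q + - (1 - \<beta>) * q = 1"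
    unfolding Q1_def q_def using \<beta> by auto
  define x2 where "x2 = 1 / (1 + \<gamma>)"
  have x2: "Q2 (2 * \<gamma> - 1) = (x2, x2 / 2)" "x2 > 0"
    unfolding Q2_def x2_def using gp by (auto simp: field_simps)
  show ?thesis
  proof (cases "u * y3 \<le> v * x3")
    case True
    have "(u, v) \<in> convex hull {(0, 0), (q, q), (x3, y3)}"
    proof (rule convex_hull_triangle_memI[where m=2 and n="- (1 - \<beta>)" and c=1])
      have det: "q * y3 - q * x3 < 0" using q Q3 by (simp add: mult_pos_neg flip: right_diff_distrib)
      then show "q * y3 - q * x3 \<noteq> 0" by linarith
      show "0 \<le> (u * y3 - v * x3) / (q * y3 - q * x3)"
        using True det by (intro divide_nonpos_neg) auto
      show "0 \<le> (q * v - q * u) / (q * y3 - q * x3)"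
        using uv q det by (intro divide_nonpos_neg) (auto simp: mult_left_mono)
      show "2 * q + - (1 - \<beta>) * q = 1" by (rule q(3))
      show "2 * x3 + - (1 - \<beta>) * y3 = 1" using Q3(4) by (simp add: algebra_simps)
      show "2 * u + - (1 - \<beta>) * v \<le> 1" using uv(4) by (simp add: algebra_simps)
    qed simp
    moreover have "convex hull {(0, 0), Q1 \<beta>, Q3 \<beta> \<gamma>} \<subseteq> quadQ \<beta> \<gamma>"
      unfolding quadQ_def by (rule hull_mono) auto
    ultimately show ?thesis using q Q3 by auto
  next
    case False
    then have "v * x3 < u * y3" by simp
    also have "\<dots> \<le> 2 * v * y3" using uv Q3 by (intro mult_right_mono) auto
    finally have "x3 < 2 * y3" using uv by (cases "v = 0") auto
    with Q3(5) \<beta> have bp: "0 < \<beta>" by force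
    have "(u, v) \<in> convex hull {(0, 0), (x3, y3), (x2, x2 / 2)}"
    proof (rule convex_hull_triangle_memI[where m=1 and n="- (2 - \<beta> - \<beta>/\<gamma>)" and c="\<beta> / (2 * \<gamma>)"])
      have det: "x3 * (x2 / 2) - y3 * x2 < 0"
        using x2 \<open>x3 < 2 * y3\<close> by (simp add: algebra_simps mult_strict_left_mono)
      then show "x3 * (x2 / 2) - y3 * x2 \<noteq> 0" by linarith
      show "0 \<le> (u * (x2 / 2) - v * x2) / (x3 * (x2 / 2) - y3 * x2)"
        using uv x2 det by (intro divide_nonpos_neg) (auto simp: algebra_simps)
      show "0 \<le> (x3 * v - y3 * u) / (x3 * (x2 / 2) - y3 * x2)"
        using False det by (intro divide_nonpos_neg) (auto simp: algebra_simps)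
      have "1 * x2 + - (2 - \<beta> - \<beta>/\<gamma>) * (x2 / 2) = x2 * (1 + \<gamma>) * (\<beta> / (2 * \<gamma>))"
        using gp by (simp add: field_simps)
      also have "x2 * (1 + \<gamma>) = 1" unfolding x2_def using gp by simp
      finally show "1 * x2 + - (2 - \<beta> - \<beta>/\<gamma>) * (x2 / 2) = \<beta> / (2 * \<gamma>)" by simp
      show "1 * u + - (2 - \<beta> - \<beta>/\<gamma>) * v \<le> \<beta> / (2 * \<gamma>)"
        using spec[OF bp] gp by (simp add: field_simps)
      show "1 * x3 + - (2 - \<beta> - \<beta>/\<gamma>) * y3 = \<beta> / (2 * \<gamma>)"
        using Q3(6) bp by (simp add: algebra_simps)
    qed (use bp gp in auto)
    moreover have "convex hull {(0, 0), Q3 \<beta> \<gamma>, Q2 (2 * \<gamma> - 1)} \<subseteq> quadQ \<beta> \<gamma>"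
      unfolding quadQ_def by (rule hull_mono) auto
    ultimately show ?thesis using x2 Q3 by auto
  qed
qed

lemma rad_restricted_weak_necessary:
  assumes E: "E \<subseteq> {1..2}" "E \<noteq> {}" and p: "1 \<le> p" and weak: "rad_restricted_weak E p (2 * p)"
  shows "(minkowski_dim E + 3) / 2 \<le> p" "assouad_dim E + 1 \<le> p"
proof -
  obtain K where K: "radial_testing E (1/p) (1/(2*p)) K"
    using rad_restricted_weak_imp_radial_testing[OF weak] p by auto
  have v: "0 \<le> 1/(2*p)" using p by simp
  have "0 \<le> 1 + (1 - minkowski_dim E) * (1/(2*p)) - 2 * (1/p)"
    by (rule radial_testing_minkowski_bound[OF K E v])
  then have "0 \<le> (1 + (1 - minkowski_dim E) * (1/(2*p)) - 2 * (1/p)) * (2 * p)" using p by simp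
  also have "\<dots> = 2 * p - 3 - minkowski_dim E" using p by (simp add: field_simps)
  finally show "(minkowski_dim E + 3) / 2 \<le> p" by simp
  show "assouad_dim E + 1 \<le> p"
  proof (cases "assouad_dim E > 0")
    case True
    let ?f = "\<lambda>s. 1/2 + (1 - s) * (1/(2*p)) - 1/p"
    have "0 \<le> ?f (assouad_dim E)"
    proof (rule nonneg_on_closed_interval[where f="?f" and a=0 and b="assouad_dim E"])
      show "continuous_on {0..assouad_dim E} ?f" by (intro continuous_intros)
      show "0 < s \<Longrightarrow> s < assouad_dim E \<Longrightarrow> 0 \<le> ?f s" for s
        by (rule radial_testing_assouad_bound[OF K E(1) v]) auto
    qed (use True in auto)
    then have "0 \<le> ?f (assouad_dim E) * (2 * p)" using p by simp
    also have "\<dots> = p - 1 - assouad_dim E" using p by (simp add: field_simps)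
    finally show ?thesis by simp
  qed (use p in simp)
qed

lemma radial_testing_constant_assouad_spec:
  assumes K: "radial_testing E u v K" and E: "E \<subseteq> {1..2}" and v: "v \<ge> 0" and uv: "u \<le> 2 * v"
    and \<theta>0: "0 \<le> \<theta>0" "\<theta>0 < 1" and \<gamma>: "\<gamma> > 0"
    and spec: "\<And>\<theta>. \<theta>0 < \<theta> \<Longrightarrow> \<theta> < 1 \<Longrightarrow> assouad_spec E \<theta> = \<gamma>"
  shows "0 \<le> (1 - \<theta>0) * (1/2 + (1 - \<gamma>) * v - u) + \<theta>0 * (2 * v - u)"
proof (rule nonneg_on_closed_interval[where f="\<lambda>\<theta>. (1 - \<theta>) * (1/2 + (1 - \<gamma>) * v - u) + \<theta> * (2 * v - u)"
      and a=\<theta>0 and b=1])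
  fix \<theta> assume \<theta>: "\<theta>0 < \<theta>" "\<theta> < 1"
  let ?f = "\<lambda>s. (1 - \<theta>) * (1/2 + (1 - s) * v - u) + \<theta> * (2 * v - u)"
  show "0 \<le> ?f \<gamma>"
  proof (rule nonneg_on_closed_interval[where f="?f" and a=0 and b=\<gamma>])
    show "continuous_on {0..\<gamma>} ?f" by (intro continuous_intros)
    show "0 < s \<Longrightarrow> s < \<gamma> \<Longrightarrow> 0 \<le> ?f s" for s
      using \<theta> \<theta>0 spec[OF \<theta>] by (intro radial_testing_assouad_spec_bound[OF K E v uv]) auto
  qed (use \<gamma> in auto)
qed (use \<theta>0 in \<open>auto intro!: continuous_intros\<close>)

lemma T_rad_subset_quadQ:
  assumes E: "E \<subseteq> {1..2}" "E \<noteq> {}" and reg: "qA_regular E"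
    and bg: "minkowski_dim E + 1 \<le> 2 * qassouad_dim E"
  shows "T_rad E \<subseteq> quadQ (minkowski_dim E) (qassouad_dim E)"
proof
  define \<beta> where "\<beta> = minkowski_dim E"
  define \<gamma> where "\<gamma> = qassouad_dim E"
  have \<beta>: "0 \<le> \<beta>" "\<beta> \<le> 1" unfolding \<beta>_def using minkowski_dim_bounds[OF E(1)] by auto
  have \<gamma>: "0 < \<gamma>" "\<beta> \<le> \<gamma>" using bg \<beta> unfolding \<beta>_def \<gamma>_def by linarith+
  have \<theta>0: "0 \<le> 1 - \<beta>/\<gamma>" "\<beta> > 0 \<Longrightarrow> 1 - \<beta>/\<gamma> < 1" using \<gamma> \<beta> by (auto simp: field_simps)
  have spec: "assouad_spec E \<theta> = \<gamma>" if "1 - \<beta>/\<gamma> < \<theta>" "\<theta> < 1" for \<theta>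
    using reg \<gamma>(1) that unfolding qA_regular_def \<beta>_def \<gamma>_def by auto
  have \<gamma>1: "\<gamma> = 1" if "\<beta> = 1"
  proof -
    have "\<gamma> = assouad_spec E (1 - \<beta>/\<gamma>/2)" using that \<gamma> by (intro spec[symmetric]) (auto simp: field_simps)
    also have "\<dots> \<le> 1" using that \<gamma> E(1) by (intro assouad_spec_le_1) auto
    finally show ?thesis using bg that unfolding \<beta>_def \<gamma>_def by linarith
  qed
  fix z assume "z \<in> T_rad E"
  then obtain u v where z: "z = (u, v)" and uv: "(u, v) \<in> T_rad E" "0 \<le> v"
    unfolding T_rad_def by auto
  then obtain K where K: "radial_testing E u v K" using T_rad_imp_radial_testing by blast
  have u2v: "u \<le> 2 * v" by (rule radial_testing_imp_u_le_2v[OF K E])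
  have "(u, v) \<in> quadQ \<beta> \<gamma>"
  proof (rule quadQ_memI[OF \<beta> _ \<gamma>1 uv(2) radial_testing_imp_v_le_u[OF K E] u2v])
    show "1 + \<beta> \<le> 2 * \<gamma>" using bg unfolding \<beta>_def \<gamma>_def by simp
    show "2 * u - (1 - \<beta>) * v \<le> 1"
      using radial_testing_minkowski_bound[OF K E uv(2)] unfolding \<beta>_def by simp
    assume "0 < \<beta>"
    then have "0 \<le> (1 - (1 - \<beta>/\<gamma>)) * (1/2 + (1 - \<gamma>) * v - u) + (1 - \<beta>/\<gamma>) * (2 * v - u)"
      using \<theta>0 \<gamma> spec by (intro radial_testing_constant_assouad_spec[OF K E(1) uv(2) u2v]) auto
    then show "0 \<le> \<beta> / \<gamma> * (1/2 + (1 - \<gamma>) * v - u) + (1 - \<beta>/\<gamma>) * (2 * v - u)" by simp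
  qed
  with z show "z \<in> quadQ (minkowski_dim E) (qassouad_dim E)" unfolding \<beta>_def \<gamma>_def by simp
qed

theorem theorem1p4:
  fixes E :: "real set" and \<beta> \<gamma> \<gamma>s :: real
  assumes "E \<subseteq> {1..2}" and "E \<noteq> {}"
    and "\<beta> = minkowski_dim E" and "\<gamma> = qassouad_dim E" and "\<gamma>s = assouad_dim E"
  shows "(\<forall>p. 1 \<le> p \<and> rad_restricted_weak E p (2 * p) \<longrightarrow> p \<ge> max ((\<beta> + 3) / 2) (\<gamma>s + 1))
     \<and> (qA_regular E \<and> 2 * \<gamma> \<ge> \<beta> + 1 \<longrightarrow> T_rad E \<subseteq> quadQ \<beta> \<gamma>)"
  using rad_restricted_weak_necessary[OF assms(1,2)] T_rad_subset_quadQ[OF assms(1,2)] assms(3-5)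
  by auto

end
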